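(* Let $n\ge 3$ and let $\phi_n\colon PB_n\to G_n^3$ be the homomorphism defined below. If $\beta\in PB_n$ is a Brunnian braid, then $\phi_n(\beta)$ is Brunnian in $G_n^3$, i.e. $q_m(\phi_n(\beta))=1$ for every $m\in\{1,\dots,n\}$.
   Context: $PB_n$ is the pure braid group on $n$ strands with the standard generators $b_{ij}$, $1\le i<j\le n$. For $m\in\{1,\dots,n\}$ let $p_m\colon PB_n\to PB_{n-1}$ be the strand-deletion homomorphism: $p_m(b_{ij})=1$ if $m\in\{i,j\}$, and otherwise $p_m(b_{ij})=b_{i'j'}$ where $i'=i$ if $i<m$ and $i'=i-1$ if $i>m$ (similarly for $j'$). A pure braid $\beta\in PB_n$ is Brunnian if $p_m(\beta)=1$ for every $m\in\{1,\dots,n\}$. $G_n^3$ is the group with generators $a_{ijk}$, one for each $3$-element subset $\{i,j,k\}\subset\{1,\dots,n\}$ (the symbol $a_{ijk}$ is symmetric in its indices), and relations: $a_{ijk}^2=1$; $a_{ijk}a_{stu}=a_{stu}a_{ijk}$ whenever $|\{i,j,k\}\cap\{s,t,u\}|<2$; and $a_{ijk}a_{ijl}a_{ikl}a_{jkl}=a_{jkl}a_{ikl}a_{ijl}a_{ijk}$ for distinct $i,j,k,l$. For $m\in\{1,\dots,n\}$ let $q_m\colon G_n^3\to G_{n-1}^3$ be the homomorphism with $q_m(a_{ijk})=1$ if $m\in\{i,j,k\}$, and otherwise $q_m(a_{ijk})=a_{i'j'k'}$ where each index larger than $m$ is decreased by $1$ and indices smaller than $m$ are unchanged. An element $x\in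 G_n^3$ is called Brunnian if $q_m(x)=1$ for every $m\in\{1,\dots,n\}$. For $1\le i<j\le n$ put $c_{i,j}=a_{i,j,j+1}a_{i,j,j+2}\cdots a_{i,j,n}\,a_{i,j,1}a_{i,j,2}\cdots a_{i,j,j-1}\in G_n^3$, where the factor with third index equal to $i$ is omitted. The homomorphism $\phi_n\colon PB_n\to G_n^3$ (established earlier in the paper to be a well-defined homomorphism) is given by $\phi_n(b_{ij})=c_{i,i+1}^{-1}c_{i,i+2}^{-1}\cdots c_{i,j-1}^{-1}\,c_{i,j}^2\,c_{i,j-1}\cdots c_{i,i+2}c_{i,i+1}$. *)

theory Defs
  imports Main
begin

text \<open>A word over generators of type 'g: a list of letters (x, b), where b = True
  means the inverse letter x^-1.\<close>
type_synonym 'g word = "('g \<times> bool) list"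

definition inv_word :: "'g word \<Rightarrow> 'g word" where
  "inv_word w = rev (map (\<lambda>(x, b). (x, \<not> b)) w)"

text \<open>Equality in the group presented by relators R: the congruence on words
  generated by free cancellation and by deleting relators.\<close>
inductive eqv :: "'g word set \<Rightarrow> 'g word \<Rightarrow> 'g word \<Rightarrow> bool" for R where
  eqv_refl: "eqv R u u"
| eqv_sym: "eqv R u v \<Longrightarrow> eqv R v u"
| eqv_trans: "eqv R u v \<Longrightarrow> eqv R v w \<Longrightarrow> eqv R u w"
| eqv_cancel: "eqv R (u @ [(x, b), (x, \<not> b)] @ v) (u @ v)"
| eqv_rel: "r \<in> R \<Longrightarrow> eqv R (u @ r @ v) (u @ v)"

definition word_map :: "('g \<Rightarrow> 'h word) \<Rightarrow> 'g word \<Rightarrow> 'h word" where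
  "word_map f w = concat (map (\<lambda>(x, b). if b then inv_word (f x) else f x) w)"

definition gen :: "'g \<Rightarrow> 'g word" where
  "gen x = [(x, False)]"

text \<open>Generators b_ij are pairs (i,j) with 1 <= i < j <= n. Relations (Birman):
  for 1<=r<s<=n, 1<=i<j<=n,
  b_rs^-1 b_ij b_rs = b_ij                         if s<i or i<r<s<j,
                    = b_rj b_ij b_rj^-1              if s=i,
                    = b_rj b_sj b_ij b_sj^-1 b_rj^-1  if i=r<s<j,
                    = b_rj b_sj b_rj^-1 b_sj^-1 b_ij b_sj b_rj b_sj^-1 b_rj^-1  if r<i<s<j.\<close>

definition pb_rhs :: "nat \<Rightarrow> nat \<Rightarrow> nat \<Rightarrow> nat \<Rightarrow> (nat \<times> nat) word" where
  "pb_rhs r s i j =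
    (let X = (\<lambda>a b. gen (a, b)); I = (\<lambda>a b. inv_word (gen (a, b))) in
     if s < i \<or> (i < r \<and> s < j) then X i j
     else if s = i then X r j @ X i j @ I r j
     else if i = r \<and> s < j then X r j @ X s j @ X i j @ I s j @ I r j
     else X r j @ X s j @ I r j @ I s j @ X i j @ X s j @ X r j @ I s j @ I r j)"

definition pb_cond :: "nat \<Rightarrow> nat \<Rightarrow> nat \<Rightarrow> nat \<Rightarrow> bool" where
  "pb_cond r s i j \<longleftrightarrow> s < i \<or> (i < r \<and> s < j) \<or> s = i \<or> (i = r \<and> s < j)
      \<or> (r < i \<and> i < s \<and> s < j)"

definition PB_rels :: "nat \<Rightarrow> (nat \<times> nat) word set" where
  "PB_rels n = {inv_word (gen (r, s)) @ gen (i, j) @ gen (r, s) @ inv_word (pb_rhs r s i j) | r s i j.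
      1 \<le> r \<and> r < s \<and> s \<le> n \<and> 1 \<le> i \<and> i < j \<and> j \<le> n \<and> pb_cond r s i j}"

text \<open>Index shift after deleting strand m.\<close>
definition sh :: "nat \<Rightarrow> nat \<Rightarrow> nat" where
  "sh m i = (if i < m then i else i - 1)"

definition pdel :: "nat \<Rightarrow> nat \<times> nat \<Rightarrow> (nat \<times> nat) word" where
  "pdel m ij = (if m = fst ij \<or> m = snd ij then [] else gen (sh m (fst ij), sh m (snd ij)))"

definition is_PB_word :: "nat \<Rightarrow> (nat \<times> nat) word \<Rightarrow> bool" where
  "is_PB_word n w \<longleftrightarrow> (\<forall>((i, j), b) \<in> set w. 1 \<le> i \<and> i < j \<and> j \<le> n)"

definition Brunnian_braid :: "nat \<Rightarrow> (nat \<times> nat) word \<Rightarrow> bool" where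
  "Brunnian_braid n w \<longleftrightarrow> (\<forall>m \<in> {1..n}. eqv (PB_rels (n - 1)) (word_map (pdel m) w) [])"

text \<open>Generators a_ijk are 3-element subsets of {1..n}.\<close>
definition a :: "nat \<Rightarrow> nat \<Rightarrow> nat \<Rightarrow> nat set word" where
  "a i j k = gen {i, j, k}"

definition G_rels :: "nat \<Rightarrow> nat set word set" where
  "G_rels n =
     {gen S @ gen S | S. S \<subseteq> {1..n} \<and> card S = 3}
   \<union> {gen S @ gen T @ inv_word (gen S) @ inv_word (gen T) | S T.
        S \<subseteq> {1..n} \<and> card S = 3 \<and> T \<subseteq> {1..n} \<and> card T = 3 \<and> card (S \<inter> T) < 2}
   \<union> {a i j k @ a i j l @ a i k l @ a j k l @ inv_word (a j k l @ a i k l @ a i j l @ a i j k) | i j k l.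
        i \<in> {1..n} \<and> j \<in> {1..n} \<and> k \<in> {1..n} \<and> l \<in> {1..n} \<and> distinct [i, j, k, l]}"

definition qdel :: "nat \<Rightarrow> nat set \<Rightarrow> nat set word" where
  "qdel m S = (if m \<in> S then [] else gen (sh m ` S))"

definition Brunnian_G :: "nat \<Rightarrow> nat set word \<Rightarrow> bool" where
  "Brunnian_G n x \<longleftrightarrow> (\<forall>m \<in> {1..n}. eqv (G_rels (n - 1)) (word_map (qdel m) x) [])"

definition c :: "nat \<Rightarrow> nat \<Rightarrow> nat \<Rightarrow> nat set word" where
  "c n i j = concat (map (\<lambda>k. a i j k) (filter (\<lambda>k. k \<noteq> i) ([j+1..<n+1] @ [1..<j])))"

definition phi :: "nat \<Rightarrow> nat \<times> nat \<Rightarrow> nat set word" where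
  "phi n ij = (let i = fst ij; j = snd ij;
                  M = concat (map (c n i) (rev [i+1..<j]))
               in inv_word M @ c n i j @ c n i j @ M)"

end

(*
  By construction q_m(phi_n(b_ij)) and phi_(n-1)(p_m(b_ij)) agree letter by letter, so for a
  Brunnian braid q_m(phi_n(beta)) = phi_(n-1)(p_m(beta)) = 1, provided phi_(n-1) is well defined,
  i.e. kills the Birman relators of PB_(n-1). To see this, write b_ij as the Artin word
  sigma_i^-1 ... sigma_(j-2)^-1 sigma_(j-1)^2 sigma_(j-2) ... sigma_i. Then phi is the restriction
  of a map on Artin words which sends sigma_p to a product of generators a_xyz, with x, y, z read
  off the current positions of the strands. This map respects the Artin relations: far
  commutation follows from the commutation relations of G_N^3, the braid relation from the
  tetrahedron relations. Finally, the Birman relations hold in the Artin braid group: inserting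
  a strand reduces them to N <= 4, where they are verified by explicit word manipulation.
*)

theory Submission
  imports Defs
begin

lemma inv_word_Nil [simp]: "inv_word [] = []"
  by (simp add: inv_word_def)

lemma inv_word_Cons [simp]: "inv_word ((x, b) # w) = inv_word w @ [(x, \<not> b)]"
  by (simp add: inv_word_def)

lemma inv_word_append [simp]: "inv_word (u @ v) = inv_word v @ inv_word u"
  by (simp add: inv_word_def)

lemma inv_word_inv_word [simp]: "inv_word (inv_word u) = u"
  by (induction u) (auto simp: inv_word_def)

lemma inv_word_concat: "inv_word (concat ws) = concat (map inv_word (rev ws))"
  by (induction ws) auto

lemma word_map_Nil [simp]: "word_map f [] = []"
  by (simp add: word_map_def)

lemma word_map_Cons [simp]:
  "word_map f ((x, b) # w) = (if b then inv_word (f x) else f x) @ word_map f w"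
  by (simp add: word_map_def)

lemma word_map_append [simp]: "word_map f (u @ v) = word_map f u @ word_map f v"
  by (simp add: word_map_def)

lemma word_map_inv_word [simp]: "word_map f (inv_word u) = inv_word (word_map f u)"
  by (induction u) auto

lemma word_map_gen [simp]: "word_map f (gen x) = f x"
  by (simp add: gen_def)

lemma word_map_concat: "word_map f (concat ws) = concat (map (word_map f) ws)"
  by (induction ws) auto

lemma word_map_word_map: "word_map f (word_map g w) = word_map (\<lambda>x. word_map f (g x)) w"
  by (induction w) auto

lemma word_map_cong: "(\<And>x b. (x, b) \<in> set w \<Longrightarrow> f x = g x) \<Longrightarrow> word_map f w = word_map g w"
  by (induction w) fastforce+

lemma word_map_letters:
  "(\<And>k. k \<in> set ks \<Longrightarrow> f k = [(g k, False)]) \<Longrightarrow>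
   word_map f (map (\<lambda>k. (k, s)) ks) = map (\<lambda>k. (g k, s)) ks"
  by (induction ks) auto

declare eqv.eqv_trans [trans]

lemma eqv_context: "eqv R x y \<Longrightarrow> eqv R (u @ x @ v) (u @ y @ v)"
proof (induction rule: eqv.induct)
  case (eqv_cancel u' x b v')
  show ?case
    using eqv.eqv_cancel[of R "u @ u'" x b "v' @ v"] by simp
next
  case (eqv_rel r u' v')
  show ?case
    using eqv.eqv_rel[OF eqv_rel, of "u @ u'" "v' @ v"] by simp
qed (blast intro: eqv.intros)+

lemma eqv_append: "eqv R x x' \<Longrightarrow> eqv R y y' \<Longrightarrow> eqv R (x @ y) (x' @ y')"
  using eqv_context[of R x x' "[]" y] eqv_context[of R y y' x' "[]"]
  by (auto intro: eqv.eqv_trans)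

lemma eqv_append_inv_word: "eqv R (w @ inv_word w) []"
proof (induction w rule: rev_induct)
  case (snoc e w)
  obtain x b where "e = (x, b)"
    by fastforce
  with snoc show ?case
    using eqv.eqv_cancel[of R w x b "inv_word w"] by (auto intro: eqv.eqv_trans)
qed (simp add: eqv.eqv_refl)

lemma eqv_inv_word_append: "eqv R (inv_word w @ w) []"
  using eqv_append_inv_word[of R "inv_word w"] by simp

lemma eqv_relator: "r \<in> R \<Longrightarrow> eqv R r []"
  using eqv.eqv_rel[of r R "[]" "[]"] by simp

lemma eqv_of_relator:
  assumes "l @ inv_word r \<in> R"
  shows "eqv R l r"
proof -
  have "eqv R l (l @ inv_word r @ r)"
    using eqv_context[OF eqv.eqv_sym[OF eqv_inv_word_append[of R r]], of l "[]"] by simp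
  also have "eqv R \<dots> r"
    using eqv_context[OF eqv_relator[OF assms], of "[]" r] by simp
  finally show ?thesis .
qed

lemma eqv_append_inv_word_NilI:
  assumes "eqv R l r"
  shows "eqv R (l @ inv_word r) []"
  using eqv_context[OF assms, of "[]" "inv_word r"] eqv_append_inv_word[of R r]
  by (auto intro: eqv.eqv_trans)

lemma eqv_inv_word: "eqv R u v \<Longrightarrow> eqv R (inv_word u) (inv_word v)"
proof (induction rule: eqv.induct)
  case (eqv_cancel u x b v)
  show ?case
    using eqv.eqv_cancel[of R "inv_word v" x b "inv_word u"] by (simp add: inv_word_def)
next
  case (eqv_rel r u v)
  have "eqv R (inv_word r) (inv_word r @ r)"
    using eqv_context[OF eqv.eqv_sym[OF eqv_relator[OF eqv_rel]], of "inv_word r" "[]"] by simp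
  also have "eqv R \<dots> []"
    by (rule eqv_inv_word_append)
  finally show ?case
    using eqv_context[of R "inv_word r" "[]" "inv_word v" "inv_word u"] by simp
qed (blast intro: eqv.intros)+

lemma eqv_word_map:
  assumes "\<And>r. r \<in> R \<Longrightarrow> eqv S (word_map f r) []"
  shows "eqv R u v \<Longrightarrow> eqv S (word_map f u) (word_map f v)"
proof (induction rule: eqv.induct)
  case (eqv_cancel u x b v)
  have "eqv S (word_map f [(x, b), (x, \<not> b)]) []"
    using eqv_append_inv_word[of S "f x"] eqv_inv_word_append[of S "f x"] by (cases b) auto
  then show ?case
    using eqv_context by fastforce
next
  case (eqv_rel r u v)
  then show ?case
    using eqv_context[OF assms[OF eqv_rel]] by fastforce
qed (blast intro: eqv.intros)+

lemma eqv_word_map_cong: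
  assumes "\<And>x b. (x, b) \<in> set w \<Longrightarrow> eqv R (f x) (g x)"
  shows "eqv R (word_map f w) (word_map g w)"
  using assms
proof (induction w)
  case (Cons e w)
  obtain x b where e: "e = (x, b)"
    by fastforce
  have "eqv R (f x) (g x)"
    using Cons.prems[of x b] e by simp
  then have "eqv R (if b then inv_word (f x) else f x) (if b then inv_word (g x) else g x)"
    using eqv_inv_word by auto
  with Cons e show ?case
    using eqv_append by fastforce
qed (simp add: eqv.eqv_refl)

lemma eqv_commute_lists:
  assumes "\<And>e f. e \<in> set u \<Longrightarrow> f \<in> set v \<Longrightarrow> eqv R [e, f] [f, e]"
  shows "eqv R (u @ v) (v @ u)"
proof -
  have letter: "eqv R (e # v) (v @ [e])" if "\<And>f. f \<in> set v \<Longrightarrow> eqv R [e, f] [f, e]" for e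
    using that
  proof (induction v)
    case (Cons f v)
    have "eqv R (e # f # v) (f # e # v)"
      using eqv_context[of R "[e, f]" "[f, e]" "[]" v] Cons.prems by simp
    also have "eqv R \<dots> (f # v @ [e])"
      using eqv_context[OF Cons.IH, of "[f]" "[]"] Cons.prems by simp
    finally show ?case by simp
  qed (simp add: eqv.eqv_refl)
  show ?thesis
    using assms
  proof (induction u)
    case (Cons e u)
    have "eqv R (e # u @ v) (e # v @ u)"
      using eqv_context[OF Cons.IH, of "[e]" "[]"] Cons.prems by simp
    also have "eqv R (e # v) (v @ [e])"
      using letter Cons.prems by simp
    then have "eqv R (e # v @ u) (v @ e # u)"
      using eqv_context[of R "e # v" "v @ [e]" "[]" u] by simp
    finally show ?case by simp
  qed (simp add: eqv.eqv_refl)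
qed

fun free_reduce :: "'g word \<Rightarrow> 'g word" where
  "free_reduce [] = []"
| "free_reduce (e # w) = (case free_reduce w of
      [] \<Rightarrow> [e]
    | f # w' \<Rightarrow> if fst e = fst f \<and> snd e \<noteq> snd f then w' else e # f # w')"

lemma eqv_free_reduce: "eqv R w (free_reduce w)"
proof (induction w)
  case (Cons e w)
  have step: "eqv R (e # w) (e # free_reduce w)"
    using eqv_context[OF Cons, of "[e]" "[]"] by simp
  show ?case
  proof (cases "free_reduce w")
    case (Cons f w')
    show ?thesis
    proof (cases "fst e = fst f \<and> snd e \<noteq> snd f")
      case True
      obtain x b where "e = (x, b)" "f = (x, \<not> b)"
        using True by (cases e, cases f) auto
      then have "eqv R (e # f # w') w'"
        using eqv.eqv_cancel[of R "[]" x b w'] by simp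
      then show ?thesis
        using step Cons True by (auto intro: eqv.eqv_trans)
    qed (use step Cons in auto)
  qed (use step in simp)
qed (simp add: eqv.eqv_refl)

lemma eqv_by_free_reduce: "free_reduce u = free_reduce v \<Longrightarrow> eqv R u v"
  by (metis eqv_free_reduce eqv.eqv_sym eqv.eqv_trans)

lemma eqv_via_free_reduce:
  assumes "eqv R u v" "free_reduce (l @ u @ r) = free_reduce x" "free_reduce (l @ v @ r) = free_reduce y"
  shows "eqv R x y"
proof -
  have "eqv R x (l @ u @ r)"
    using eqv_by_free_reduce assms(2) by metis
  also have "eqv R \<dots> (l @ v @ r)"
    by (rule eqv_context[OF assms(1)])
  also have "eqv R \<dots> y"
    using eqv_by_free_reduce assms(3) by metis
  finally show ?thesis .
qed

definition triple :: "nat \<Rightarrow> nat set \<Rightarrow> bool" where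
  "triple N S \<longleftrightarrow> S \<subseteq> {1..N} \<and> card S = 3"

lemma tripleI:
  "x \<in> {1..N} \<Longrightarrow> y \<in> {1..N} \<Longrightarrow> z \<in> {1..N} \<Longrightarrow> x \<noteq> y \<Longrightarrow> x \<noteq> z \<Longrightarrow> y \<noteq> z \<Longrightarrow>
   triple N {x, y, z}"
  by (auto simp: triple_def)

lemma G_square: "triple N S \<Longrightarrow> eqv (G_rels N) [(S, False), (S, False)] []"
  by (rule eqv_relator) (auto simp: G_rels_def gen_def triple_def)

lemma G_commute:
  assumes "triple N S" "triple N T" "card (S \<inter> T) < 2"
  shows "eqv (G_rels N) [(S, False), (T, False)] [(T, False), (S, False)]"
proof (rule eqv_of_relator)
  show "[(S, False), (T, False)] @ inv_word [(T, False), (S, False)] \<in> G_rels N"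
    using assms unfolding G_rels_def triple_def gen_def inv_word_def by auto
qed

lemma G_tetrahedron:
  assumes "i \<in> {1..N}" "j \<in> {1..N}" "k \<in> {1..N}" "l \<in> {1..N}" "distinct [i, j, k, l]"
  shows "eqv (G_rels N)
    [({i,j,k}, False), ({i,j,l}, False), ({i,k,l}, False), ({j,k,l}, False)]
    [({j,k,l}, False), ({i,k,l}, False), ({i,j,l}, False), ({i,j,k}, False)]"
proof (rule eqv_of_relator)
  have "a i j k @ a i j l @ a i k l @ a j k l @ inv_word (a j k l @ a i k l @ a i j l @ a i j k)
      \<in> G_rels N"
    unfolding G_rels_def by (rule UnI2) (use assms in blast)
  then show "[({i,j,k}, False), ({i,j,l}, False), ({i,k,l}, False), ({j,k,l}, False)] @
      inv_word [({j,k,l}, False), ({i,k,l}, False), ({i,j,l}, False), ({i,j,k}, False)] \<in> G_rels N"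
    by (simp add: a_def gen_def)
qed

lemma G_commute_lists:
  assumes "\<And>e f. e \<in> set u \<Longrightarrow> f \<in> set v \<Longrightarrow>
    \<exists>S T. e = (S, False) \<and> f = (T, False) \<and> triple N S \<and> triple N T \<and> card (S \<inter> T) < 2"
  shows "eqv (G_rels N) (u @ v) (v @ u)"
proof (rule eqv_commute_lists)
  fix e f
  assume "e \<in> set u" "f \<in> set v"
  with assms obtain S T where "e = (S, False)" "f = (T, False)"
    and "triple N S" "triple N T" "card (S \<inter> T) < 2"
    by blast
  then show "eqv (G_rels N) [e, f] [f, e]"
    by (simp add: G_commute)
qed

definition edge_letters :: "nat \<Rightarrow> nat \<Rightarrow> nat list \<Rightarrow> nat set word" where
  "edge_letters x y L = map (\<lambda>s. ({x, y, s}, False)) L"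

lemma edge_letters_simps [simp]:
  "edge_letters x y [] = []"
  "edge_letters x y (s # L) = ({x, y, s}, False) # edge_letters x y L"
  "edge_letters x y (L @ L') = edge_letters x y L @ edge_letters x y L'"
  by (simp_all add: edge_letters_def)

lemma edge_letters_commute: "edge_letters y x L = edge_letters x y L"
  by (simp add: edge_letters_def insert_commute)

lemma G_commute_edge_letters:
  assumes V: "{x, y, x', y'} \<subseteq> V" "V \<subseteq> {1..N}" and "x \<noteq> y" "x' \<noteq> y'"
    and edges: "card ({x, y} \<inter> {x', y'}) < 2"
    and ST: "set S \<subseteq> {1..N} - V" "set T \<subseteq> {1..N} - V" "set S \<inter> set T = {}"
  shows "eqv (G_rels N) (edge_letters x y S @ edge_letters x' y' T) (edge_letters x' y' T @ edge_letters x y S)"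
proof (rule G_commute_lists)
  fix e f
  assume "e \<in> set (edge_letters x y S)" "f \<in> set (edge_letters x' y' T)"
  then obtain s t where e: "e = ({x,y,s}, False)" and f: "f = ({x',y',t}, False)"
    and st: "s \<in> set S" "t \<in> set T"
    by (auto simp: edge_letters_def)
  from st ST V have s: "s \<in> {1..N}" "s \<notin> {x, y, x', y'}" and t: "t \<in> {1..N}" "t \<notin> {x, y, x', y'}"
    and "s \<noteq> t"
    by blast+
  then have "{x,y,s} \<inter> {x',y',t} \<subseteq> {x, y} \<inter> {x', y'}"
    by blast
  then have "card ({x,y,s} \<inter> {x',y',t}) < 2"
    using card_mono[of "{x, y} \<inter> {x', y'}" "{x,y,s} \<inter> {x',y',t}"] edges by simp
  moreover have "triple N {x,y,s}" "triple N {x',y',t}"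
    by (rule tripleI; use s t V assms(3,4) in blast)+
  ultimately show "\<exists>S T. e = (S, False) \<and> f = (T, False) \<and> triple N S \<and> triple N T \<and> card (S \<inter> T) < 2"
    using e f by blast
qed

lemma G_commute_cross_edge_letters:
  assumes xyzu: "{x, y, z, u} \<subseteq> {1..N}" "distinct [x, y, z, u]"
    and AB: "set A \<subseteq> {1..N} - {x, y}" "set B \<subseteq> {1..N} - {z, u}"
    and cross: "\<And>\<alpha> \<beta>. \<alpha> \<in> set A \<Longrightarrow> \<beta> \<in> set B \<Longrightarrow> \<alpha> \<in> {z, u} \<Longrightarrow> \<beta> \<notin> {x, y}"
  shows "eqv (G_rels N) (edge_letters x y A @ edge_letters z u B) (edge_letters z u B @ edge_letters x y A)"
proof (rule G_commute_lists)
  fix e f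
  assume "e \<in> set (edge_letters x y A)" "f \<in> set (edge_letters z u B)"
  then obtain \<alpha> \<beta> where e: "e = ({x,y,\<alpha>}, False)" and f: "f = ({z,u,\<beta>}, False)"
    and \<alpha>\<beta>: "\<alpha> \<in> set A" "\<beta> \<in> set B"
    by (auto simp: edge_letters_def)
  from \<alpha>\<beta> AB have \<alpha>: "\<alpha> \<in> {1..N}" "\<alpha> \<noteq> x" "\<alpha> \<noteq> y" and \<beta>: "\<beta> \<in> {1..N}" "\<beta> \<noteq> z" "\<beta> \<noteq> u"
    by blast+
  obtain w where "{x,y,\<alpha>} \<inter> {z,u,\<beta>} \<subseteq> {w}"
  proof (cases "\<alpha> \<in> {z, u}")
    case True
    then have "\<beta> \<notin> {x, y}"
      using cross[OF \<alpha>\<beta>] by blast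
    then show ?thesis
      using that[of \<alpha>] \<alpha> \<beta> xyzu(2) by auto
  next
    case False
    then show ?thesis
      using that[of \<beta>] \<alpha> \<beta> xyzu(2) by auto
  qed
  then have "card ({x,y,\<alpha>} \<inter> {z,u,\<beta>}) < 2"
    using card_mono[of "{w}" "{x,y,\<alpha>} \<inter> {z,u,\<beta>}"] by simp
  moreover have "triple N {x,y,\<alpha>}" "triple N {z,u,\<beta>}"
    by (rule tripleI; use \<alpha> \<beta> xyzu in auto)+
  ultimately show "\<exists>S T. e = (S, False) \<and> f = (T, False) \<and> triple N S \<and> triple N T \<and> card (S \<inter> T) < 2"
    using e f by auto
qed

text \<open>The image of the braid relation \<open>\<sigma>\<^sub>p\<sigma>\<^sub>p\<^sub>+\<^sub>1\<sigma>\<^sub>p = \<sigma>\<^sub>p\<^sub>+\<^sub>1\<sigma>\<^sub>p\<sigma>\<^sub>p\<^sub>+\<^sub>1\<close> reduces to this identity.\<close>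

lemma G_tetrahedron_chain:
  assumes xyz: "x \<in> {1..N}" "y \<in> {1..N}" "z \<in> {1..N}" "x \<noteq> y" "x \<noteq> z" "y \<noteq> z"
    and "distinct R" "set R \<subseteq> {1..N} - {x, y, z}"
  shows "eqv (G_rels N)
    (({x,y,z}, False) # edge_letters x y R @ edge_letters x z R @ edge_letters y z R)
    (edge_letters y z R @ edge_letters x z R @ edge_letters x y R @ [({x,y,z}, False)])"
  using assms(7,8)
proof (induction R)
  case (Cons r R)
  define X where "X = edge_letters x y R"
  define Z where "Z = edge_letters x z R"
  define Y where "Y = edge_letters y z R"
  define t where "t = ({x,y,z}, False)"
  define xr where "xr = ({x,y,r}, False)"
  define zr where "zr = ({x,z,r}, False)"
  define yr where "yr = ({y,z,r}, False)"
  have r: "r \<in> {1..N}" "r \<noteq> x" "r \<noteq> y" "r \<noteq> z"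
    using Cons.prems by auto
  have R: "set R \<subseteq> {1..N} - {x, y, z}" "set [r] \<subseteq> {1..N} - {x, y, z}"
    "set R \<inter> set [r] = {}" "set [r] \<inter> set R = {}"
    using Cons.prems by auto
  have V: "{x, y, z} \<subseteq> {1..N}" "{x, y, x, z} \<subseteq> {x, y, z}" "{x, y, y, z} \<subseteq> {x, y, z}"
    "{x, z, y, z} \<subseteq> {x, y, z}"
    using xyz by auto
  have edges: "card ({x, y} \<inter> {x, z}) < 2" "card ({x, y} \<inter> {y, z}) < 2" "card ({x, z} \<inter> {y, z}) < 2"
    using xyz by auto
  note commute = G_commute_edge_letters[OF _ V(1) _ _ _ R(1) R(2) R(3)]
    G_commute_edge_letters[OF _ V(1) _ _ _ R(2) R(1) R(4)]
  have fan_x: "eqv (G_rels N) (X @ [zr]) ([zr] @ X)" "eqv (G_rels N) ([xr] @ Z) (Z @ [xr])"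
    using commute(1)[OF V(2) xyz(4,5) edges(1)] commute(2)[OF V(2) xyz(4,5) edges(1)]
    by (simp_all add: X_def Z_def xr_def zr_def)
  have fan_y: "eqv (G_rels N) (X @ [yr]) ([yr] @ X)" "eqv (G_rels N) ([xr] @ Y) (Y @ [xr])"
    using commute(1)[OF V(3) xyz(4,6) edges(2)] commute(2)[OF V(3) xyz(4,6) edges(2)]
    by (simp_all add: X_def Y_def xr_def yr_def)
  have fan_z: "eqv (G_rels N) (Z @ [yr]) ([yr] @ Z)" "eqv (G_rels N) ([zr] @ Y) (Y @ [zr])"
    using commute(1)[OF V(4) xyz(5,6) edges(3)] commute(2)[OF V(4) xyz(5,6) edges(3)]
    by (simp_all add: Y_def Z_def yr_def zr_def)
  have "eqv (G_rels N) (t # xr # X @ zr # Z @ yr # Y) (t # xr # zr # X @ Z @ yr # Y)"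
    using eqv_context[OF fan_x(1), of "[t, xr]" "Z @ yr # Y"] by simp
  also have "eqv (G_rels N) \<dots> (t # xr # zr # X @ yr # Z @ Y)"
    using eqv_context[OF fan_z(1), of "t # xr # zr # X" Y] by simp
  also have "eqv (G_rels N) \<dots> (t # xr # zr # yr # X @ Z @ Y)"
    using eqv_context[OF fan_y(1), of "[t, xr, zr]" "Z @ Y"] by simp
  also have "eqv (G_rels N) \<dots> (yr # zr # xr # t # X @ Z @ Y)"
    using eqv_context[OF G_tetrahedron[of x N y z r], of "[]" "X @ Z @ Y"] r xyz
    by (simp add: t_def xr_def yr_def zr_def)
  also have "eqv (G_rels N) \<dots> (yr # zr # xr # Y @ Z @ X @ [t])"
    using eqv_context[OF Cons.IH, of "[yr, zr, xr]" "[]"] Cons.prems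
    by (simp add: X_def Y_def Z_def t_def)
  also have "eqv (G_rels N) \<dots> (yr # zr # Y @ xr # Z @ X @ [t])"
    using eqv_context[OF fan_y(2), of "[yr, zr]" "Z @ X @ [t]"] by simp
  also have "eqv (G_rels N) \<dots> (yr # Y @ zr # xr # Z @ X @ [t])"
    using eqv_context[OF fan_z(2), of "[yr]" "xr # Z @ X @ [t]"] by simp
  also have "eqv (G_rels N) \<dots> (yr # Y @ zr # Z @ xr # X @ [t])"
    using eqv_context[OF fan_x(2), of "yr # Y @ [zr]" "X @ [t]"] by simp
  finally show ?case
    by (simp add: X_def Y_def Z_def t_def xr_def yr_def zr_def)
qed (simp add: eqv.eqv_refl)

section \<open>Artin braid words acting on \<open>G\<^sub>N\<^sup>3\<close>\<close>

text \<open>A braid word is a word in the Artin generators \<open>\<sigma>\<^sub>p\<close>, \<open>1 \<le> p < N\<close>. The map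
  \<open>braid_G\<close> reads it from left to right while keeping track of a labelling \<open>\<pi>\<close> of the
  positions by strands: \<open>\<sigma>\<^sub>p\<close> contributes \<open>sigma_word N \<pi> p\<close> and then swaps the labels
  of positions \<open>p\<close> and \<open>p + 1\<close>. This is the action of \<open>B\<^sub>N\<close> on \<open>G\<^sub>N\<^sup>3 \<rtimes> S\<^sub>N\<close>.\<close>

abbreviation \<sigma> :: "nat \<Rightarrow> nat \<times> bool" where "\<sigma> p \<equiv> (p, False)"
abbreviation \<sigma>' :: "nat \<Rightarrow> nat \<times> bool" where "\<sigma>' p \<equiv> (p, True)"

definition swap_adj :: "nat \<Rightarrow> (nat \<Rightarrow> nat) \<Rightarrow> nat \<Rightarrow> nat" where
  "swap_adj p \<pi> = \<pi>(p := \<pi> (Suc p), Suc p := \<pi> p)"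

definition perm_step :: "nat \<Rightarrow> (nat \<Rightarrow> nat) \<Rightarrow> nat \<Rightarrow> nat \<Rightarrow> nat" where
  "perm_step N \<pi> p = (if 1 \<le> p \<and> p < N then swap_adj p \<pi> else \<pi>)"

definition third_indices :: "nat \<Rightarrow> nat \<Rightarrow> nat list" where
  "third_indices N p = [p + 2..<N + 1] @ [1..<p]"

definition sigma_word :: "nat \<Rightarrow> (nat \<Rightarrow> nat) \<Rightarrow> nat \<Rightarrow> nat set word" where
  "sigma_word N \<pi> p = edge_letters (\<pi> p) (\<pi> (Suc p)) (map \<pi> (third_indices N p))"

fun braid_G :: "nat \<Rightarrow> (nat \<Rightarrow> nat) \<Rightarrow> (nat \<times> bool) list \<Rightarrow> nat set word" where
  "braid_G N \<pi> [] = []"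
| "braid_G N \<pi> ((p, b) # w) =
    (if b then inv_word (sigma_word N \<pi> p) else sigma_word N \<pi> p) @ braid_G N (perm_step N \<pi> p) w"

fun braid_perm :: "nat \<Rightarrow> (nat \<Rightarrow> nat) \<Rightarrow> (nat \<times> bool) list \<Rightarrow> nat \<Rightarrow> nat" where
  "braid_perm N \<pi> [] = \<pi>"
| "braid_perm N \<pi> ((p, b) # w) = braid_perm N (perm_step N \<pi> p) w"

lemma swap_adj_apply:
  "swap_adj p \<pi> t = (if t = p then \<pi> (Suc p) else if t = Suc p then \<pi> p else \<pi> t)"
  by (simp add: swap_adj_def)

lemma swap_adj_swap_adj [simp]: "swap_adj p (swap_adj p \<pi>) = \<pi>"
  by (rule ext) (auto simp: swap_adj_def)

lemma swap_adj_commute: "p + 2 \<le> q \<or> q + 2 \<le> p \<Longrightarrow> swap_adj p (swap_adj q \<pi>) = swap_adj q (swap_adj p \<pi>)"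
  by (rule ext) (auto simp: swap_adj_def)

lemma perm_step_perm_step [simp]: "perm_step N (perm_step N \<pi> p) p = \<pi>"
  by (simp add: perm_step_def)

lemma sigma_word_swap_adj [simp]: "sigma_word N (swap_adj p \<pi>) p = sigma_word N \<pi> p"
proof -
  have "map (swap_adj p \<pi>) (third_indices N p) = map \<pi> (third_indices N p)"
    by (auto simp: third_indices_def swap_adj_def)
  moreover have "swap_adj p \<pi> p = \<pi> (Suc p)" "swap_adj p \<pi> (Suc p) = \<pi> p"
    by (simp_all add: swap_adj_def)
  ultimately show ?thesis
    unfolding sigma_word_def by (metis edge_letters_commute)
qed

lemma sigma_word_perm_step [simp]: "sigma_word N (perm_step N \<pi> p) p = sigma_word N \<pi> p"
  by (simp add: perm_step_def)

lemma braid_G_append: "braid_G N \<pi> (u @ v) = braid_G N \<pi> u @ braid_G N (braid_perm N \<pi> u) v"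
  by (induction u arbitrary: \<pi>) auto

lemma braid_perm_append: "braid_perm N \<pi> (u @ v) = braid_perm N (braid_perm N \<pi> u) v"
  by (induction u arbitrary: \<pi>) auto

lemma braid_G_inv_word:
  "braid_G N (braid_perm N \<pi> w) (inv_word w) = inv_word (braid_G N \<pi> w)"
  "braid_perm N (braid_perm N \<pi> w) (inv_word w) = \<pi>"
  by (induction w arbitrary: \<pi>) (auto simp: braid_G_append braid_perm_append)

definition is_perm :: "nat \<Rightarrow> (nat \<Rightarrow> nat) \<Rightarrow> bool" where
  "is_perm N \<pi> \<longleftrightarrow> bij_betw \<pi> {1..N} {1..N}"

lemma is_perm_id: "is_perm N id"
  by (simp add: is_perm_def)

lemma is_perm_swap_adj:
  assumes "is_perm N \<pi>" "1 \<le> p" "p < N"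
  shows "is_perm N (swap_adj p \<pi>)"
proof -
  define \<tau> where "\<tau> = (\<lambda>t::nat. if t = p then Suc p else if t = Suc p then p else t)"
  have "bij_betw \<tau> {1..N} {1..N}"
    by (rule bij_betw_byWitness[of _ \<tau>]) (use assms(2,3) in \<open>auto simp: \<tau>_def\<close>)
  moreover have "swap_adj p \<pi> = \<pi> \<circ> \<tau>"
    by (rule ext) (simp add: swap_adj_def \<tau>_def)
  ultimately show ?thesis
    using bij_betw_trans assms(1) by (auto simp: is_perm_def)
qed

lemma is_perm_braid_perm: "is_perm N \<pi> \<Longrightarrow> is_perm N (braid_perm N \<pi> w)"
  by (induction w arbitrary: \<pi>) (auto simp: perm_step_def is_perm_swap_adj)

lemma is_perm_range: "is_perm N \<pi> \<Longrightarrow> t \<in> {1..N} \<Longrightarrow> \<pi> t \<in> {1..N}"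
  unfolding is_perm_def by (rule bij_betw_apply)

lemma is_perm_inj: "is_perm N \<pi> \<Longrightarrow> t \<in> {1..N} \<Longrightarrow> s \<in> {1..N} \<Longrightarrow> \<pi> t = \<pi> s \<longleftrightarrow> t = s"
  unfolding is_perm_def by (meson bij_betw_imp_inj_on inj_on_eq_iff)

lemma is_perm_image_diff:
  assumes \<pi>: "is_perm N \<pi>" and "set P \<subseteq> {1..N} - Q" "Q \<subseteq> {1..N}"
  shows "set (map \<pi> P) \<subseteq> {1..N} - \<pi> ` Q"
proof
  fix s
  assume "s \<in> set (map \<pi> P)"
  then obtain t where t: "t \<in> {1..N}" "t \<notin> Q" "s = \<pi> t"
    using assms(2) by auto
  have "\<pi> t \<noteq> \<pi> q" if "q \<in> Q" for q
    using that t assms(3) is_perm_inj[OF \<pi>, of t q] by auto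
  then show "s \<in> {1..N} - \<pi> ` Q"
    using t is_perm_range[OF \<pi>] by auto
qed

lemma upt_split: "i \<le> j \<Longrightarrow> j \<le> k \<Longrightarrow> [i..<k] = [i..<j] @ [j..<k]"
  by (metis le_add_diff_inverse upt_add_eq_append)

lemma sigma_word_far_commute:
  assumes \<pi>: "is_perm N \<pi>" and pq: "1 \<le> p" "p + 2 \<le> q" "q < N"
  shows "eqv (G_rels N) (sigma_word N \<pi> p @ sigma_word N (swap_adj p \<pi>) q)
                         (sigma_word N \<pi> q @ sigma_word N (swap_adj q \<pi>) p)"
proof -
  define x y z u where "x = \<pi> p" "y = \<pi> (Suc p)" "z = \<pi> q" "u = \<pi> (Suc q)"
  define PA PB where "PA = [p + 2..<q]" "PB = [q + 2..<N + 1] @ [1..<p]"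
  define A B where "A = map \<pi> PA" "B = map \<pi> PB"
  have "[p + 2..<N + 1] = PA @ [q, Suc q] @ [q + 2..<N + 1]"
    using pq upt_split[of "p + 2" q "N + 1"] by (simp add: PA_PB_def upt_conv_Cons)
  moreover have "[1..<q] = [1..<p] @ [p, Suc p] @ PA"
    using pq upt_split[of 1 p q] by (simp add: PA_PB_def upt_conv_Cons)
  ultimately have third: "third_indices N p = PA @ [q, Suc q] @ PB" "third_indices N q = PB @ [p, Suc p] @ PA"
    by (simp_all add: third_indices_def PA_PB_def)
  have V: "set PA \<subseteq> {1..N} - {p, Suc p, q, Suc q}" "set PB \<subseteq> {1..N} - {p, Suc p, q, Suc q}"
    "{p, Suc p, q, Suc q} \<subseteq> {1..N}"
    using pq by (auto simp: PA_PB_def)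
  have AB: "set A \<subseteq> {1..N} - {x, y, z, u}" "set B \<subseteq> {1..N} - {x, y, z, u}"
    using is_perm_image_diff[OF \<pi> V(1,3)] is_perm_image_diff[OF \<pi> V(2,3)]
    by (simp_all add: A_B_def x_y_z_u_def)
  have xyzu: "{x, y, z, u} \<subseteq> {1..N}" "distinct [x, y, z, u]"
    using pq is_perm_range[OF \<pi>] is_perm_inj[OF \<pi>] by (auto simp: x_y_z_u_def)
  have agree: "map (swap_adj p \<pi>) PA = A" "map (swap_adj p \<pi>) PB = B"
    "map (swap_adj q \<pi>) PA = A" "map (swap_adj q \<pi>) PB = B"
    using pq by (auto simp: swap_adj_def PA_PB_def A_B_def)
  have words: "sigma_word N \<pi> p = edge_letters x y (A @ [z, u] @ B)"
    "sigma_word N (swap_adj p \<pi>) q = edge_letters z u (B @ [y, x] @ A)"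
    "sigma_word N \<pi> q = edge_letters z u (B @ [x, y] @ A)"
    "sigma_word N (swap_adj q \<pi>) p = edge_letters x y (A @ [u, z] @ B)"
    using pq by (simp_all add: sigma_word_def third agree A_B_def x_y_z_u_def swap_adj_apply)
  note commute = G_commute_cross_edge_letters[OF xyzu]
  have tetrahedron: "eqv (G_rels N) (edge_letters x y [z, u] @ edge_letters z u [y, x])
      (edge_letters z u [x, y] @ edge_letters x y [u, z])"
    using G_tetrahedron[of y N x z u] xyzu by (simp add: insert_commute)
  have "eqv (G_rels N) (sigma_word N \<pi> p @ sigma_word N (swap_adj p \<pi>) q)
      (edge_letters x y A @ edge_letters x y [z, u] @ edge_letters z u B @ edge_letters x y B @ edge_letters z u [y, x] @ edge_letters z u A)"
    using eqv_context[OF commute[of B B], of "edge_letters x y (A @ [z, u])" "edge_letters z u ([y, x] @ A)"] AB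
    by (auto simp: words)
  also have "eqv (G_rels N) \<dots>
      (edge_letters x y A @ edge_letters x y [z, u] @ edge_letters z u B @ edge_letters z u [y, x] @ edge_letters x y B @ edge_letters z u A)"
    using eqv_context[OF commute[of B "[y, x]"], of "edge_letters x y (A @ [z, u]) @ edge_letters z u B" "edge_letters z u A"] AB xyzu
    by auto
  also have "eqv (G_rels N) \<dots>
      (edge_letters z u B @ edge_letters x y A @ edge_letters x y [z, u] @ edge_letters z u [y, x] @ edge_letters x y B @ edge_letters z u A)"
    using eqv_context[OF commute[of "A @ [z, u]" B], of "[]" "edge_letters z u [y, x] @ edge_letters x y B @ edge_letters z u A"] AB xyzu
    by auto
  also have "eqv (G_rels N) \<dots>
      (edge_letters z u B @ edge_letters x y A @ edge_letters z u [x, y] @ edge_letters x y [u, z] @ edge_letters x y B @ edge_letters z u A)"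
    using eqv_context[OF tetrahedron, of "edge_letters z u B @ edge_letters x y A" "edge_letters x y B @ edge_letters z u A"]
    by simp
  also have "eqv (G_rels N) \<dots>
      (edge_letters z u B @ edge_letters z u [x, y] @ edge_letters x y A @ edge_letters x y [u, z] @ edge_letters x y B @ edge_letters z u A)"
    using eqv_context[OF commute[of A "[x, y]"], of "edge_letters z u B" "edge_letters x y ([u, z] @ B) @ edge_letters z u A"] AB xyzu
    by auto
  also have "eqv (G_rels N) \<dots>
      (edge_letters z u B @ edge_letters z u [x, y] @ edge_letters z u A @ edge_letters x y A @ edge_letters x y [u, z] @ edge_letters x y B)"
    using eqv_context[OF commute[of "A @ [u, z] @ B" A], of "edge_letters z u (B @ [x, y])" "[]"] AB xyzu
    by auto
  also have "\<dots> = sigma_word N \<pi> q @ sigma_word N (swap_adj q \<pi>) p"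
    by (simp add: words)
  finally show ?thesis .
qed

lemma braid_G_braid_relator:
  assumes \<pi>: "is_perm N \<pi>" and p: "1 \<le> p" "p + 2 \<le> N"
  shows "eqv (G_rels N) (braid_G N \<pi> [\<sigma> p, \<sigma> (Suc p), \<sigma> p, \<sigma>' (Suc p), \<sigma>' p, \<sigma>' (Suc p)]) []"
proof -
  define x y z where "x = \<pi> p" "y = \<pi> (Suc p)" "z = \<pi> (Suc (Suc p))"
  define RP where "RP = [p + 3..<N + 1] @ [1..<p]"
  define L where "L = map \<pi> RP"
  have third: "third_indices N p = Suc (Suc p) # RP" "third_indices N (Suc p) = RP @ [p]"
    using p by (simp_all add: third_indices_def RP_def upt_conv_Cons numeral_eq_Suc)
  have V: "set RP \<subseteq> {1..N} - {p, Suc p, Suc (Suc p)}" "{p, Suc p, Suc (Suc p)} \<subseteq> {1..N}"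
    using p by (auto simp: RP_def)
  have L: "set L \<subseteq> {1..N} - {x, y, z}"
    using is_perm_image_diff[OF \<pi> V] by (simp add: L_def x_y_z_def)
  have "inj_on \<pi> {1..N}"
    using \<pi> by (simp add: is_perm_def bij_betw_def)
  then have "inj_on \<pi> (set RP)"
    using V(1) inj_on_subset by blast
  moreover have "distinct RP"
    by (auto simp: RP_def)
  ultimately have "distinct L"
    by (simp add: L_def distinct_map)
  have xyz: "x \<in> {1..N}" "y \<in> {1..N}" "z \<in> {1..N}" "x \<noteq> y" "x \<noteq> z" "y \<noteq> z"
    using V is_perm_range[OF \<pi>] is_perm_inj[OF \<pi>] by (auto simp: x_y_z_def)
  define \<pi>1 \<pi>2 \<pi>3 \<pi>4 \<pi>5 where "\<pi>1 = swap_adj p \<pi>" "\<pi>2 = swap_adj (Suc p) \<pi>1"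
    "\<pi>3 = swap_adj p \<pi>2" "\<pi>4 = swap_adj (Suc p) \<pi>3" "\<pi>5 = swap_adj p \<pi>4"
  note defs = \<pi>1_\<pi>2_\<pi>3_\<pi>4_\<pi>5_def x_y_z_def swap_adj_apply
  have steps: "perm_step N \<pi> p = \<pi>1" "perm_step N \<pi>1 (Suc p) = \<pi>2" "perm_step N \<pi>2 p = \<pi>3"
    "perm_step N \<pi>3 (Suc p) = \<pi>4" "perm_step N \<pi>4 p = \<pi>5"
    using p by (simp_all add: perm_step_def \<pi>1_\<pi>2_\<pi>3_\<pi>4_\<pi>5_def)
  have agree: "map \<pi> RP = L" "map \<pi>1 RP = L" "map \<pi>2 RP = L" "map \<pi>3 RP = L"
    "map \<pi>4 RP = L" "map \<pi>5 RP = L"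
    using V by (auto simp: L_def defs)
  have labels: "\<pi> p = x" "\<pi> (Suc p) = y" "\<pi> (Suc (Suc p)) = z"
    "\<pi>1 p = y" "\<pi>1 (Suc p) = x" "\<pi>1 (Suc (Suc p)) = z"
    "\<pi>2 p = y" "\<pi>2 (Suc p) = z" "\<pi>2 (Suc (Suc p)) = x"
    "\<pi>3 p = z" "\<pi>3 (Suc p) = y" "\<pi>3 (Suc (Suc p)) = x"
    "\<pi>4 p = z" "\<pi>4 (Suc p) = x" "\<pi>4 (Suc (Suc p)) = y"
    "\<pi>5 p = x" "\<pi>5 (Suc p) = z" "\<pi>5 (Suc (Suc p)) = y"
    by (simp_all add: defs)
  define t X Y Z where "t = ({x, y, z}, False)"
    "X = edge_letters x y L" "Y = edge_letters y z L" "Z = edge_letters x z L"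
  have words: "sigma_word N \<pi> p = t # X" "sigma_word N \<pi>1 (Suc p) = Z @ [t]"
    "sigma_word N \<pi>2 p = t # Y" "sigma_word N \<pi>3 (Suc p) = X @ [t]"
    "sigma_word N \<pi>4 p = t # Z" "sigma_word N \<pi>5 (Suc p) = Y @ [t]"
    by (simp_all add: sigma_word_def third agree labels t_X_Y_Z_def edge_letters_commute insert_commute)
  have word: "braid_G N \<pi> [\<sigma> p, \<sigma> (Suc p), \<sigma> p, \<sigma>' (Suc p), \<sigma>' p, \<sigma>' (Suc p)] =
      (t # X @ Z @ [t, t] @ Y) @ inv_word (Y @ [t, t] @ Z @ X @ [t])"
    by (simp add: steps words inv_word_def)
  have tt: "eqv (G_rels N) [t, t] []"
    using G_square[of N "{x, y, z}"] xyz by (simp add: t_X_Y_Z_def tripleI)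
  have "eqv (G_rels N) (t # X @ Z @ [t, t] @ Y) (t # X @ Z @ Y)"
    using eqv_context[OF tt, of "t # X @ Z" Y] by simp
  also have "eqv (G_rels N) \<dots> (Y @ Z @ X @ [t])"
    using G_tetrahedron_chain[OF xyz \<open>distinct L\<close> L] by (simp add: t_X_Y_Z_def)
  also have "eqv (G_rels N) \<dots> (Y @ [t, t] @ Z @ X @ [t])"
    using eqv_context[OF eqv.eqv_sym[OF tt], of Y "Z @ X @ [t]"] by simp
  finally show ?thesis
    unfolding word by (rule eqv_append_inv_word_NilI)
qed

definition distant :: "nat \<Rightarrow> nat \<Rightarrow> nat \<Rightarrow> bool" where
  "distant N p q \<longleftrightarrow> 1 \<le> p \<and> 1 \<le> q \<and> p < N \<and> q < N \<and> (p + 2 \<le> q \<or> q + 2 \<le> p)"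

definition Artin_rels :: "nat \<Rightarrow> (nat \<times> bool) list set" where
  "Artin_rels N =
     {[\<sigma> p, \<sigma> q, \<sigma>' p, \<sigma>' q] | p q. distant N p q}
   \<union> {[\<sigma> p, \<sigma> (Suc p), \<sigma> p, \<sigma>' (Suc p), \<sigma>' p, \<sigma>' (Suc p)] | p. 1 \<le> p \<and> p + 2 \<le> N}"

lemma braid_G_far_relator:
  assumes \<pi>: "is_perm N \<pi>" and "distant N p q"
  shows "eqv (G_rels N) (braid_G N \<pi> [\<sigma> p, \<sigma> q, \<sigma>' p, \<sigma>' q]) []"
    and "braid_perm N \<pi> [\<sigma> p, \<sigma> q, \<sigma>' p, \<sigma>' q] = \<pi>"
proof -
  have pq: "1 \<le> p" "1 \<le> q" "p < N" "q < N" "p + 2 \<le> q \<or> q + 2 \<le> p"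
    using assms(2) by (auto simp: distant_def)
  have swap: "swap_adj p (swap_adj q \<rho>) = swap_adj q (swap_adj p \<rho>)" for \<rho>
    using swap_adj_commute pq(5) by blast
  have word: "braid_G N \<pi> [\<sigma> p, \<sigma> q, \<sigma>' p, \<sigma>' q] =
      (sigma_word N \<pi> p @ sigma_word N (swap_adj p \<pi>) q) @ inv_word (sigma_word N \<pi> q @ sigma_word N (swap_adj q \<pi>) p)"
    using pq by (simp add: perm_step_def swap) (metis swap sigma_word_swap_adj)
  have "eqv (G_rels N) (sigma_word N \<pi> p @ sigma_word N (swap_adj p \<pi>) q)
      (sigma_word N \<pi> q @ sigma_word N (swap_adj q \<pi>) p)"
    using pq sigma_word_far_commute[OF \<pi>] eqv.eqv_sym by (metis le_add2 le_trans)
  then show "eqv (G_rels N) (braid_G N \<pi> [\<sigma> p, \<sigma> q, \<sigma>' p, \<sigma>' q]) []"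
    unfolding word by (rule eqv_append_inv_word_NilI)
  show "braid_perm N \<pi> [\<sigma> p, \<sigma> q, \<sigma>' p, \<sigma>' q] = \<pi>"
    using pq by (simp add: perm_step_def swap)
qed

lemma braid_G_Artin_relator:
  assumes "r \<in> Artin_rels N" "is_perm N \<pi>"
  shows "eqv (G_rels N) (braid_G N \<pi> r) []" "braid_perm N \<pi> r = \<pi>"
proof -
  have braid_perm: "braid_perm N \<pi> [\<sigma> p, \<sigma> (Suc p), \<sigma> p, \<sigma>' (Suc p), \<sigma>' p, \<sigma>' (Suc p)] = \<pi>"
    if "1 \<le> p" "p + 2 \<le> N" for p
    using that by (auto simp: perm_step_def swap_adj_def)
  show "eqv (G_rels N) (braid_G N \<pi> r) []" "braid_perm N \<pi> r = \<pi>"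
    using assms braid_G_far_relator braid_G_braid_relator braid_perm unfolding Artin_rels_def by auto
qed

lemma braid_G_eqv:
  assumes "eqv (Artin_rels N) u v" "is_perm N \<pi>"
  shows "eqv (G_rels N) (braid_G N \<pi> u) (braid_G N \<pi> v) \<and> braid_perm N \<pi> u = braid_perm N \<pi> v"
  using assms
proof (induction arbitrary: \<pi> rule: eqv.induct)
  case (eqv_cancel u x b v)
  define \<rho> where "\<rho> = braid_perm N \<pi> u"
  have "eqv (G_rels N) (braid_G N \<rho> [(x, b), (x, \<not> b)]) []"
    using eqv_append_inv_word eqv_inv_word_append by (cases b) simp_all
  then show ?case
    using eqv_context[of "G_rels N" "braid_G N \<rho> [(x, b), (x, \<not> b)]" "[]" "braid_G N \<pi> u" "braid_G N \<rho> v"]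
    by (simp add: braid_G_append braid_perm_append \<rho>_def)
next
  case (eqv_rel r u v)
  define \<rho> where "\<rho> = braid_perm N \<pi> u"
  have "is_perm N \<rho>"
    using is_perm_braid_perm eqv_rel.prems \<rho>_def by blast
  with eqv_rel.hyps show ?case
    using eqv_context[of "G_rels N" "braid_G N \<rho> r" "[]" "braid_G N \<pi> u" "braid_G N \<rho> v"]
      braid_G_Artin_relator[of r N \<rho>]
    by (simp add: braid_G_append braid_perm_append \<rho>_def)
qed (auto intro: eqv.intros)

definition pure_braid_word :: "nat \<Rightarrow> nat \<Rightarrow> (nat \<times> bool) list" where
  "pure_braid_word i j = map (\<lambda>k. \<sigma>' k) [i..<j - 1] @ [\<sigma> (j - 1), \<sigma> (j - 1)]
     @ map (\<lambda>k. \<sigma> k) (rev [i..<j - 1])"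

text \<open>The labelling after strand \<open>i\<close> has been moved to position \<open>k\<close>.\<close>

definition cycle_perm :: "nat \<Rightarrow> nat \<Rightarrow> nat \<Rightarrow> nat" where
  "cycle_perm i k t = (if t < i \<or> k < t then t else if t = k then i else Suc t)"

lemma cycle_perm_id: "cycle_perm i i = id"
  by (rule ext) (simp add: cycle_perm_def)

lemma swap_adj_cycle_perm: "i \<le> k \<Longrightarrow> swap_adj k (cycle_perm i k) = cycle_perm i (Suc k)"
  by (rule ext) (auto simp: swap_adj_def cycle_perm_def)

lemma perm_step_cycle_perm:
  "i \<le> k \<Longrightarrow> 1 \<le> k \<Longrightarrow> k < N \<Longrightarrow> perm_step N (cycle_perm i k) k = cycle_perm i (Suc k)"
  by (simp add: perm_step_def swap_adj_cycle_perm)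

lemma c_eq_edge_letters: "c N i j = edge_letters i j (filter (\<lambda>l. l \<noteq> i) ([j + 1..<N + 1] @ [1..<j]))"
proof -
  have singletons: "concat (map (\<lambda>k. [f k]) L) = map f L" for f :: "nat \<Rightarrow> nat set \<times> bool" and L
    by (induction L) auto
  show ?thesis
    unfolding c_def a_def gen_def edge_letters_def by (rule singletons)
qed

lemma sigma_word_cycle_perm:
  assumes "1 \<le> i" "i \<le> k"
  shows "sigma_word N (cycle_perm i k) k = c N i (Suc k)"
proof -
  have "map (cycle_perm i k) [k + 2..<N + 1] = [k + 2..<N + 1]"
    by (rule map_idI) (auto simp: cycle_perm_def)
  moreover have "map (cycle_perm i k) [1..<i] = [1..<i]"
    by (rule map_idI) (auto simp: cycle_perm_def)
  moreover have "map (cycle_perm i k) [i..<k] = map Suc [i..<k]"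
    by (rule map_cong) (auto simp: cycle_perm_def)
  moreover have "[1..<k] = [1..<i] @ [i..<k]" "[1..<Suc k] = [1..<i] @ i # [Suc i..<Suc k]"
    using assms upt_split[of 1 i k] upt_split[of 1 i "Suc k"] by (simp_all add: upt_conv_Cons)
  ultimately have "map (cycle_perm i k) (third_indices N k) = filter (\<lambda>l. l \<noteq> i) ([Suc k + 1..<N + 1] @ [1..<Suc k])"
    using assms by (simp add: third_indices_def map_Suc_upt filter_id_conv)
  moreover have "cycle_perm i k k = i" "cycle_perm i k (Suc k) = Suc k"
    using assms by (auto simp: cycle_perm_def)
  ultimately show ?thesis
    by (simp add: sigma_word_def c_eq_edge_letters)
qed

lemma braid_G_inverse_run:
  assumes "1 \<le> i" "i \<le> k\<^sub>0" "k\<^sub>0 \<le> k\<^sub>1" "k\<^sub>1 < N"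
  shows "braid_G N (cycle_perm i k\<^sub>0) (map (\<lambda>k. \<sigma>' k) [k\<^sub>0..<k\<^sub>1]) =
      concat (map (\<lambda>k. inv_word (c N i (Suc k))) [k\<^sub>0..<k\<^sub>1])"
    and "braid_perm N (cycle_perm i k\<^sub>0) (map (\<lambda>k. \<sigma>' k) [k\<^sub>0..<k\<^sub>1]) = cycle_perm i k\<^sub>1"
  using assms(3,4)
proof (induction k\<^sub>1 rule: dec_induct)
  case (step n)
  have n: "i \<le> n" "1 \<le> n" "n < N"
    using assms step by auto
  { case 1
    show ?case
      using step n by (simp add: braid_G_append perm_step_cycle_perm sigma_word_cycle_perm[OF assms(1)]) }
  { case 2
    show ?case
      using step n by (simp add: braid_perm_append perm_step_cycle_perm) }
qed simp_all

lemma braid_G_run: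
  assumes "1 \<le> i" "i \<le> k\<^sub>0" "k\<^sub>0 \<le> k\<^sub>1" "k\<^sub>1 < N"
  shows "braid_G N (cycle_perm i k\<^sub>1) (map (\<lambda>k. \<sigma> k) (rev [k\<^sub>0..<k\<^sub>1])) =
      concat (map (\<lambda>k. c N i (Suc k)) (rev [k\<^sub>0..<k\<^sub>1]))"
    and "braid_perm N (cycle_perm i k\<^sub>1) (map (\<lambda>k. \<sigma> k) (rev [k\<^sub>0..<k\<^sub>1])) = cycle_perm i k\<^sub>0"
  using assms(3,4)
proof (induction k\<^sub>1 rule: dec_induct)
  case (step n)
  have n: "i \<le> n" "1 \<le> n" "n < N"
    using assms step by auto
  have swap: "cycle_perm i (Suc n) = swap_adj n (cycle_perm i n)"
    using n by (simp add: swap_adj_cycle_perm)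
  then have "perm_step N (cycle_perm i (Suc n)) n = cycle_perm i n"
    using n by (simp add: perm_step_def)
  { case 1
    show ?case
      using step n swap \<open>perm_step N (cycle_perm i (Suc n)) n = cycle_perm i n\<close>
      by (simp add: sigma_word_cycle_perm[OF assms(1)]) }
  { case 2
    show ?case
      using step n \<open>perm_step N (cycle_perm i (Suc n)) n = cycle_perm i n\<close> by simp }
qed simp_all

lemma phi_eq_braid_G:
  assumes "1 \<le> i" "i < j" "j \<le> N"
  shows "braid_G N id (pure_braid_word i j) = phi N (i, j)"
    and "braid_perm N id (pure_braid_word i j) = id"
proof -
  define k where "k = j - 1"
  have k: "i \<le> k" "1 \<le> k" "k < N" "j = Suc k"
    using assms by (auto simp: k_def)
  have "cycle_perm i (Suc k) = swap_adj k (cycle_perm i k)"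
    using k by (simp add: swap_adj_cycle_perm)
  then have second: "perm_step N (cycle_perm i (Suc k)) k = cycle_perm i k"
    "sigma_word N (cycle_perm i (Suc k)) k = c N i (Suc k)"
    using k sigma_word_cycle_perm[OF assms(1) k(1)] by (simp_all add: perm_step_def)
  note runs = braid_G_inverse_run[OF assms(1) order_refl k(1,3)] braid_G_run[OF assms(1) order_refl k(1,3)]
  have up: "[i + 1..<j] = map Suc [i..<k]"
    using k by (simp add: map_Suc_upt)
  have "map (\<lambda>k. c N i (Suc k)) (rev [i..<k]) = map (c N i) (rev [i + 1..<j])"
    by (simp only: up rev_map map_map comp_def)
  moreover have "concat (map (\<lambda>k. inv_word (c N i (Suc k))) [i..<k]) = inv_word (concat (map (c N i) (rev [i + 1..<j])))"
    by (simp only: up inv_word_concat rev_map rev_rev_ident map_map comp_def)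
  ultimately show "braid_G N id (pure_braid_word i j) = phi N (i, j)"
    using runs k second by (simp add: pure_braid_word_def phi_def Let_def braid_G_append braid_perm_append
        cycle_perm_id perm_step_cycle_perm sigma_word_cycle_perm[OF assms(1)] del: upt_Suc)
  show "braid_perm N id (pure_braid_word i j) = id"
    using runs k second by (simp add: pure_braid_word_def braid_perm_append cycle_perm_id perm_step_cycle_perm)
qed

lemma eqv_commute_signs:
  assumes "eqv R [\<sigma> p, \<sigma> q] [\<sigma> q, \<sigma> p]" "p \<noteq> q"
  shows "eqv R [(p, s), (q, t)] [(q, t), (p, s)]"
proof -
  have "eqv R [\<sigma>' p, \<sigma> q] [\<sigma> q, \<sigma>' p]"
    by (rule eqv.eqv_sym, rule eqv_via_free_reduce[OF assms(1), of "[\<sigma>' p]" "[\<sigma>' p]"]) (use assms(2) in simp_all)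
  moreover have "eqv R [\<sigma> p, \<sigma>' q] [\<sigma>' q, \<sigma> p]"
    by (rule eqv.eqv_sym, rule eqv_via_free_reduce[OF assms(1), of "[\<sigma>' q]" "[\<sigma>' q]"]) (use assms(2) in simp_all)
  moreover have "eqv R [\<sigma>' p, \<sigma>' q] [\<sigma>' q, \<sigma>' p]"
    by (rule eqv_via_free_reduce[OF assms(1), of "[\<sigma>' q, \<sigma>' p]" "[\<sigma>' p, \<sigma>' q]"]) (use assms(2) in simp_all)
  ultimately show ?thesis
    using assms(1) by (cases s; cases t) auto
qed

lemma Artin_far: "distant N p q \<Longrightarrow> eqv (Artin_rels N) [(p, s), (q, t)] [(q, t), (p, s)]"
  by (rule eqv_commute_signs, rule eqv_of_relator) (auto simp: Artin_rels_def distant_def)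

lemma Artin_braid:
  "1 \<le> p \<Longrightarrow> p + 2 \<le> N \<Longrightarrow> eqv (Artin_rels N) [\<sigma> p, \<sigma> (Suc p), \<sigma> p] [\<sigma> (Suc p), \<sigma> p, \<sigma> (Suc p)]"
  by (rule eqv_of_relator) (auto simp: Artin_rels_def)

lemma Artin_commute_lists:
  assumes "\<And>e f. e \<in> set u \<Longrightarrow> f \<in> set v \<Longrightarrow> distant N (fst e) (fst f)"
  shows "eqv (Artin_rels N) (u @ v) (v @ u)"
  by (rule eqv_commute_lists) (metis assms Artin_far prod.collapse)

context
  fixes R and a b c :: nat
  assumes distinct: "distinct [a, b, c]"
    and ab: "eqv R [\<sigma> a, \<sigma> b, \<sigma> a] [\<sigma> b, \<sigma> a, \<sigma> b]"
    and bc: "eqv R [\<sigma> b, \<sigma> c, \<sigma> b] [\<sigma> c, \<sigma> b, \<sigma> c]"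
    and ac: "\<And>s t. eqv R [(a, s), (c, t)] [(c, t), (a, s)]"
begin

lemma braid_conj_left:
  "eqv R ([\<sigma>' a, \<sigma> b, \<sigma> a] @ [\<sigma> c] @ [\<sigma>' a, \<sigma> b, \<sigma> a]) ([\<sigma> c] @ [\<sigma>' a, \<sigma> b, \<sigma> a] @ [\<sigma> c])"
proof -
  have "eqv R ([\<sigma>' a, \<sigma> b, \<sigma> a] @ [\<sigma> c] @ [\<sigma>' a, \<sigma> b, \<sigma> a]) [\<sigma>' a, \<sigma> b, \<sigma> c, \<sigma> b, \<sigma> a]"
    by (rule eqv_via_free_reduce[OF ac[of False False], of "[\<sigma>' a, \<sigma> b]" "[\<sigma>' a, \<sigma> b, \<sigma> a]"])
      (use distinct in simp_all)
  also have "eqv R \<dots> [\<sigma>' a, \<sigma> c, \<sigma> b, \<sigma> c, \<sigma> a]"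
    using eqv_context[OF bc, of "[\<sigma>' a]" "[\<sigma> a]"] by simp
  also have "eqv R \<dots> [\<sigma> c, \<sigma>' a, \<sigma> b, \<sigma> c, \<sigma> a]"
    using eqv_context[OF ac[of True False], of "[]" "[\<sigma> b, \<sigma> c, \<sigma> a]"] by simp
  also have "eqv R \<dots> ([\<sigma> c] @ [\<sigma>' a, \<sigma> b, \<sigma> a] @ [\<sigma> c])"
    using eqv_context[OF eqv.eqv_sym[OF ac[of False False]], of "[\<sigma> c, \<sigma>' a, \<sigma> b]" "[]"] by simp
  finally show ?thesis .
qed

lemma braid_conj_right:
  "eqv R ([\<sigma> a] @ [\<sigma>' b, \<sigma> c, \<sigma> b] @ [\<sigma> a]) ([\<sigma>' b, \<sigma> c, \<sigma> b] @ [\<sigma> a] @ [\<sigma>' b, \<sigma> c, \<sigma> b])"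
proof -
  have conj: "eqv R [\<sigma> c, \<sigma> b, \<sigma>' c] [\<sigma>' b, \<sigma> c, \<sigma> b]"
    by (rule eqv_via_free_reduce[OF bc, of "[\<sigma>' b]" "[\<sigma>' c]"]) (use distinct in simp_all)
  have "eqv R ([\<sigma> a] @ [\<sigma>' b, \<sigma> c, \<sigma> b] @ [\<sigma> a]) [\<sigma> a, \<sigma> c, \<sigma> b, \<sigma>' c, \<sigma> a]"
    using eqv_context[OF eqv.eqv_sym[OF conj], of "[\<sigma> a]" "[\<sigma> a]"] by simp
  also have "eqv R \<dots> [\<sigma> c, \<sigma> a, \<sigma> b, \<sigma>' c, \<sigma> a]"
    using eqv_context[OF ac[of False False], of "[]" "[\<sigma> b, \<sigma>' c, \<sigma> a]"] by simp
  also have "eqv R \<dots> [\<sigma> c, \<sigma> a, \<sigma> b, \<sigma> a, \<sigma>' c]"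
    using eqv_context[OF eqv.eqv_sym[OF ac[of False True]], of "[\<sigma> c, \<sigma> a, \<sigma> b]" "[]"] by simp
  also have "eqv R \<dots> [\<sigma> c, \<sigma> b, \<sigma> a, \<sigma> b, \<sigma>' c]"
    using eqv_context[OF ab, of "[\<sigma> c]" "[\<sigma>' c]"] by simp
  also have "eqv R \<dots> ([\<sigma> c, \<sigma> b, \<sigma>' c] @ [\<sigma> a] @ [\<sigma> c, \<sigma> b, \<sigma>' c])"
    by (rule eqv_via_free_reduce[OF ac[of False True], of "[\<sigma> c, \<sigma> b]" "[\<sigma> c, \<sigma> b, \<sigma>' c]"])
      (use distinct in simp_all)
  also have "eqv R \<dots> ([\<sigma>' b, \<sigma> c, \<sigma> b] @ [\<sigma> a] @ [\<sigma>' b, \<sigma> c, \<sigma> b])"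
    using eqv_append[OF conj eqv_append[OF eqv.eqv_refl[of R "[\<sigma> a]"] conj]] by simp
  finally show ?thesis .
qed

end

section \<open>Inserting a strand\<close>

text \<open>Adding a strand at position \<open>m\<close>, on the Artin generators of \<open>B\<^sub>N\<^sub>-\<^sub>1\<close>; by
  \<open>strand_insert_Artin_relator\<close> it induces a homomorphism \<open>B\<^sub>N\<^sub>-\<^sub>1 \<rightarrow> B\<^sub>N\<close>.\<close>

definition strand_insert :: "nat \<Rightarrow> nat \<Rightarrow> (nat \<times> bool) list" where
  "strand_insert m p =
    (if Suc p < m then [\<sigma> p] else if m \<le> p then [\<sigma> (Suc p)] else [\<sigma>' p, \<sigma> (Suc p), \<sigma> p])"

lemma strand_insert_far_relator:
  assumes "distant (N - 1) p q" "1 \<le> m" "m \<le> N"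
  shows "eqv (Artin_rels N) (word_map (strand_insert m) [\<sigma> p, \<sigma> q, \<sigma>' p, \<sigma>' q]) []"
proof -
  have "eqv (Artin_rels N) (strand_insert m p @ strand_insert m q) (strand_insert m q @ strand_insert m p)"
    by (rule Artin_commute_lists) (use assms in \<open>auto simp: strand_insert_def distant_def split: if_splits\<close>)
  then show ?thesis
    using eqv_append_inv_word_NilI by fastforce
qed

lemma strand_insert_braid:
  assumes "1 \<le> p" "p + 2 \<le> N - 1"
  shows "eqv (Artin_rels N) (strand_insert m p @ strand_insert m (Suc p) @ strand_insert m p)
    (strand_insert m (Suc p) @ strand_insert m p @ strand_insert m (Suc p))"
proof -
  have ab: "eqv (Artin_rels N) [\<sigma> p, \<sigma> (Suc p), \<sigma> p] [\<sigma> (Suc p), \<sigma> p, \<sigma> (Suc p)]"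
    and bc: "eqv (Artin_rels N) [\<sigma> (Suc p), \<sigma> (Suc (Suc p)), \<sigma> (Suc p)] [\<sigma> (Suc (Suc p)), \<sigma> (Suc p), \<sigma> (Suc (Suc p))]"
    using assms Artin_braid[of p N] Artin_braid[of "Suc p" N] by simp_all
  have ac: "eqv (Artin_rels N) [(p, s), (Suc (Suc p), t)] [(Suc (Suc p), t), (p, s)]" for s t
    using assms by (intro Artin_far) (auto simp: distant_def)
  consider "Suc (Suc p) < m" | "m \<le> p" | "Suc p = m" | "Suc (Suc p) = m"
    by linarith
  then show ?thesis
  proof cases
    case 3
    then show ?thesis
      using braid_conj_left[OF _ ab bc ac] by (simp add: strand_insert_def)
  next
    case 4
    then show ?thesis
      using braid_conj_right[OF _ ab bc ac] by (simp add: strand_insert_def)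
  qed (use assms ab bc Artin_braid[of "Suc (Suc p)" N] in \<open>auto simp: strand_insert_def\<close>)
qed

lemma strand_insert_Artin_relator:
  assumes "r \<in> Artin_rels (N - 1)" "1 \<le> m" "m \<le> N"
  shows "eqv (Artin_rels N) (word_map (strand_insert m) r) []"
  using assms strand_insert_far_relator eqv_append_inv_word_NilI[OF strand_insert_braid]
  unfolding Artin_rels_def by auto

definition index_insert :: "nat \<Rightarrow> nat \<Rightarrow> nat" where
  "index_insert m t = (if t < m then t else Suc t)"

lemma pure_braid_word_adjacent: "pure_braid_word i (Suc i) = [\<sigma> i, \<sigma> i]"
  by (simp add: pure_braid_word_def)

lemma pure_braid_word_step:
  "Suc i < j \<Longrightarrow> pure_braid_word i j = \<sigma>' i # pure_braid_word (Suc i) j @ [\<sigma> i]"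
  by (simp add: pure_braid_word_def upt_conv_Cons)

lemma pure_braid_word_letters:
  assumes "i < j" "e \<in> set (pure_braid_word i j)"
  shows "i \<le> fst e \<and> fst e < j"
  using assms by (auto simp: pure_braid_word_def)

lemma strand_insert_pure_braid_word:
  assumes "1 \<le> i" "i < j" "j \<le> N - 1" "1 \<le> m" "m \<le> N"
  shows "eqv (Artin_rels N) (word_map (strand_insert m) (pure_braid_word i j))
    (pure_braid_word (index_insert m i) (index_insert m j))"
proof -
  obtain d where j: "j = i + Suc d"
    using less_imp_Suc_add[OF assms(2)] by auto
  have "eqv (Artin_rels N) (word_map (strand_insert m) (pure_braid_word i (i + Suc d)))
    (pure_braid_word (index_insert m i) (index_insert m (i + Suc d)))"
    if "1 \<le> i" "i + Suc d \<le> N - 1" for i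
    using that
  proof (induction d arbitrary: i)
    case 0
    consider "Suc i < m" | "m \<le> i" | "m = Suc i"
      by linarith
    then show ?case
    proof cases
      case 3
      then show ?thesis
        by (intro eqv_by_free_reduce) (simp add: strand_insert_def index_insert_def pure_braid_word_adjacent pure_braid_word_step[of i])
    qed (auto simp: strand_insert_def index_insert_def pure_braid_word_adjacent intro: eqv.eqv_refl)
  next
    case (Suc d)
    let ?W = "pure_braid_word (index_insert m (Suc i)) (index_insert m (i + Suc (Suc d)))"
    have IH: "eqv (Artin_rels N) (word_map (strand_insert m) (pure_braid_word (Suc i) (i + Suc (Suc d)))) ?W"
      using Suc.IH[of "Suc i"] Suc.prems by simp
    have word: "pure_braid_word i (i + Suc (Suc d)) = \<sigma>' i # pure_braid_word (Suc i) (i + Suc (Suc d)) @ [\<sigma> i]"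
      by (simp add: pure_braid_word_step)
    consider "Suc i < m" | "m \<le> i" | "m = Suc i"
      by linarith
    then show ?case
    proof cases
      case 1
      then have "index_insert m i = i" "index_insert m (Suc i) = Suc i" "strand_insert m i = [\<sigma> i]"
        "Suc i < index_insert m (i + Suc (Suc d))"
        by (simp_all add: index_insert_def strand_insert_def)
      then show ?thesis
        using eqv_context[OF IH, of "[\<sigma>' i]" "[\<sigma> i]"] unfolding word by (simp add: pure_braid_word_step[of i])
    next
      case 2
      then have "index_insert m i = Suc i" "index_insert m (Suc i) = Suc (Suc i)" "strand_insert m i = [\<sigma> (Suc i)]"
        "Suc (Suc i) < index_insert m (i + Suc (Suc d))"
        by (simp_all add: index_insert_def strand_insert_def)
      then show ?thesis
        using eqv_context[OF IH, of "[\<sigma>' (Suc i)]" "[\<sigma> (Suc i)]"] unfolding word by (simp add: pure_braid_word_step[of "Suc i"])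
    next
      case 3
      define W where "W = pure_braid_word (Suc (Suc i)) (Suc (i + Suc (Suc d)))"
      have W: "?W = W"
        using 3 by (simp add: index_insert_def W_def)
      have "eqv (Artin_rels N) ([\<sigma> i] @ W) (W @ [\<sigma> i])"
      proof (rule Artin_commute_lists)
        fix e f
        assume "e \<in> set [\<sigma> i]" "f \<in> set W"
        moreover have "Suc (Suc i) \<le> fst f \<and> fst f < Suc (i + Suc (Suc d))"
          by (rule pure_braid_word_letters) (use \<open>f \<in> set W\<close> in \<open>simp_all add: W_def\<close>)
        ultimately show "distant N (fst e) (fst f)"
          using Suc.prems by (auto simp: distant_def)
      qed
      then have "eqv (Artin_rels N) (\<sigma> i # W @ [\<sigma>' i]) W"
        using eqv_context[of _ "[\<sigma> i] @ W" "W @ [\<sigma> i]" "[]" "[\<sigma>' i]"] eqv.eqv_cancel[of _ W i False "[]"]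
        by (auto intro: eqv.eqv_trans)
      then have "eqv (Artin_rels N) ([\<sigma>' i, \<sigma>' (Suc i)] @ (\<sigma> i # W @ [\<sigma>' i]) @ [\<sigma> (Suc i), \<sigma> i])
          ([\<sigma>' i, \<sigma>' (Suc i)] @ W @ [\<sigma> (Suc i), \<sigma> i])"
        by (rule eqv_context)
      moreover have "eqv (Artin_rels N) (word_map (strand_insert m) (pure_braid_word i (i + Suc (Suc d))))
          ([\<sigma>' i, \<sigma>' (Suc i)] @ (\<sigma> i # W @ [\<sigma>' i]) @ [\<sigma> (Suc i), \<sigma> i])"
        using eqv_context[OF IH, of "[\<sigma>' i, \<sigma>' (Suc i), \<sigma> i]" "[\<sigma>' i, \<sigma> (Suc i), \<sigma> i]"] 3 W
        unfolding word by (simp add: strand_insert_def)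
      moreover have "pure_braid_word (index_insert m i) (index_insert m (i + Suc (Suc d))) =
          [\<sigma>' i, \<sigma>' (Suc i)] @ W @ [\<sigma> (Suc i), \<sigma> i]"
        using 3 by (simp add: index_insert_def W_def pure_braid_word_step)
      ultimately show ?thesis
        by (metis eqv.eqv_trans)
    qed
  qed
  then show ?thesis
    using assms j by simp
qed

section \<open>The Birman relations hold in the Artin group\<close>

definition birman_relator :: "nat \<Rightarrow> nat \<Rightarrow> nat \<Rightarrow> nat \<Rightarrow> (nat \<times> nat) word" where
  "birman_relator r s i j = inv_word (gen (r, s)) @ gen (i, j) @ gen (r, s) @ inv_word (pb_rhs r s i j)"

context
  fixes R and p q :: nat
  assumes braid: "eqv R [\<sigma> p, \<sigma> q, \<sigma> p] [\<sigma> q, \<sigma> p, \<sigma> q]" and "p \<noteq> q"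
begin

lemma braid_squares_commute:
  "eqv R [\<sigma> p, \<sigma> q, \<sigma> q, \<sigma> p, \<sigma> q, \<sigma> q] [\<sigma> q, \<sigma> q, \<sigma> p, \<sigma> q, \<sigma> q, \<sigma> p]"
proof -
  have "eqv R [\<sigma> p, \<sigma> q, \<sigma> q, \<sigma> p, \<sigma> q, \<sigma> q] [\<sigma> p, \<sigma> q, \<sigma> p, \<sigma> q, \<sigma> p, \<sigma> q]"
    by (rule eqv_via_free_reduce[OF eqv.eqv_sym[OF braid], of "[\<sigma> p, \<sigma> q]" "[\<sigma> q]"]) (use \<open>p \<noteq> q\<close> in simp_all)
  also have "eqv R \<dots> [\<sigma> q, \<sigma> p, \<sigma> q, \<sigma> q, \<sigma> p, \<sigma> q]"
    by (rule eqv_via_free_reduce[OF braid, of "[]" "[\<sigma> q, \<sigma> p, \<sigma> q]"]) (use \<open>p \<noteq> q\<close> in simp_all)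
  also have "eqv R \<dots> [\<sigma> q, \<sigma> p, \<sigma> q, \<sigma> p, \<sigma> q, \<sigma> p]"
    by (rule eqv_via_free_reduce[OF eqv.eqv_sym[OF braid], of "[\<sigma> q, \<sigma> p, \<sigma> q]" "[]"]) (use \<open>p \<noteq> q\<close> in simp_all)
  also have "eqv R \<dots> [\<sigma> q, \<sigma> q, \<sigma> p, \<sigma> q, \<sigma> q, \<sigma> p]"
    by (rule eqv_via_free_reduce[OF braid, of "[\<sigma> q]" "[\<sigma> q, \<sigma> p]"]) (use \<open>p \<noteq> q\<close> in simp_all)
  finally show ?thesis .
qed

lemma braid_conj_square: "eqv R [\<sigma>' q, \<sigma>' p, \<sigma> q, \<sigma> q, \<sigma> p, \<sigma> q] [\<sigma> p, \<sigma> p]"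
proof -
  have "eqv R [\<sigma>' q, \<sigma>' p, \<sigma> q, \<sigma> q, \<sigma> p, \<sigma> q] [\<sigma>' q, \<sigma>' p, \<sigma> q, \<sigma> p, \<sigma> q, \<sigma> p]"
    by (rule eqv_via_free_reduce[OF eqv.eqv_sym[OF braid], of "[\<sigma>' q, \<sigma>' p, \<sigma> q]" "[]"]) (use \<open>p \<noteq> q\<close> in simp_all)
  also have "eqv R \<dots> [\<sigma> p, \<sigma> p]"
    by (rule eqv_via_free_reduce[OF eqv.eqv_sym[OF braid], of "[\<sigma>' q, \<sigma>' p]" "[\<sigma> p]"]) (use \<open>p \<noteq> q\<close> in simp_all)
  finally show ?thesis .
qed

end

lemma Artin_braid_12: "eqv (Artin_rels N) [\<sigma> 1, \<sigma> 2, \<sigma> 1] [\<sigma> 2, \<sigma> 1, \<sigma> 2]" if "3 \<le> N"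
  using Artin_braid[of 1 N] that by (simp add: numeral_2_eq_2)

lemma birman_relators_3:
  shows "eqv (Artin_rels 3) (word_map (case_prod pure_braid_word) (birman_relator 1 2 2 3)) []"
    and "eqv (Artin_rels 3) (word_map (case_prod pure_braid_word) (birman_relator 1 2 1 3)) []"
proof -
  have braid_12: "eqv (Artin_rels 3) [\<sigma> 1, \<sigma> 2, \<sigma> 1] [\<sigma> 2, \<sigma> 1, \<sigma> 2]"
    by (rule Artin_braid_12) simp
  note squares_12 = braid_squares_commute[OF braid_12, simplified]
  note squares_12_sym = eqv.eqv_sym[OF squares_12]
  have w1: "word_map (case_prod pure_braid_word) (birman_relator 1 2 2 3) = [\<sigma>' 1, \<sigma>' 1, \<sigma> 2, \<sigma> 2, \<sigma> 1, \<sigma> 1, \<sigma>' 1, \<sigma> 2, \<sigma> 2, \<sigma> 1, \<sigma>' 2, \<sigma>' 2, \<sigma>' 1, \<sigma>' 2, \<sigma>' 2, \<sigma> 1]"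
    by (simp add: birman_relator_def pb_rhs_def pure_braid_word_def gen_def inv_word_def upt_rec)
  have "eqv (Artin_rels 3) [\<sigma>' 1, \<sigma>' 1, \<sigma> 2, \<sigma> 2, \<sigma> 1, \<sigma> 1, \<sigma>' 1, \<sigma> 2, \<sigma> 2, \<sigma> 1, \<sigma>' 2, \<sigma>' 2, \<sigma>' 1, \<sigma>' 2, \<sigma>' 2, \<sigma> 1]
      []"
    by (rule eqv_via_free_reduce[OF squares_12_sym, of "[\<sigma>' 1,\<sigma>' 1]" "[\<sigma>' 2,\<sigma>' 2,\<sigma>' 1,\<sigma>' 2,\<sigma>' 2,\<sigma> 1]"]) (simp_all)
  then show "eqv (Artin_rels 3) (word_map (case_prod pure_braid_word) (birman_relator 1 2 2 3)) []"
    unfolding w1 .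
  have w2: "word_map (case_prod pure_braid_word) (birman_relator 1 2 1 3) = [\<sigma>' 1, \<sigma>' 1, \<sigma>' 1, \<sigma> 2, \<sigma> 2, \<sigma> 1, \<sigma> 1, \<sigma> 1, \<sigma>' 1, \<sigma> 2, \<sigma> 2, \<sigma> 1, \<sigma> 2, \<sigma> 2, \<sigma>' 1, \<sigma>' 2, \<sigma>' 2, \<sigma> 1, \<sigma>' 2, \<sigma>' 2, \<sigma>' 1, \<sigma>' 2, \<sigma>' 2, \<sigma> 1]"
    by (simp add: birman_relator_def pb_rhs_def pure_braid_word_def gen_def inv_word_def upt_rec)
  have "eqv (Artin_rels 3) [\<sigma>' 1, \<sigma>' 1, \<sigma>' 1, \<sigma> 2, \<sigma> 2, \<sigma> 1, \<sigma> 1, \<sigma> 1, \<sigma>' 1, \<sigma> 2, \<sigma> 2, \<sigma> 1, \<sigma> 2, \<sigma> 2, \<sigma>' 1, \<sigma>' 2, \<sigma>' 2, \<sigma> 1, \<sigma>' 2, \<sigma>' 2, \<sigma>' 1, \<sigma>' 2, \<sigma>' 2, \<sigma> 1]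
      [\<sigma>' 1, \<sigma>' 1, \<sigma>' 1, \<sigma> 2, \<sigma> 2, \<sigma> 1, \<sigma> 2, \<sigma> 2, \<sigma> 1, \<sigma> 1, \<sigma>' 2, \<sigma>' 2, \<sigma>' 1, \<sigma>' 2, \<sigma>' 2, \<sigma> 1]"
    by (rule eqv_via_free_reduce[OF squares_12, of "[\<sigma>' 1, \<sigma>' 1, \<sigma>' 1, \<sigma> 2, \<sigma> 2, \<sigma> 1]" "[\<sigma>' 1, \<sigma>' 2, \<sigma>' 2, \<sigma> 1, \<sigma>' 2, \<sigma>' 2, \<sigma>' 1, \<sigma>' 2, \<sigma>' 2, \<sigma> 1]"]) (simp_all)
  also have "eqv (Artin_rels 3) \<dots>
      [\<sigma>' 1, \<sigma>' 1, \<sigma> 2, \<sigma> 2, \<sigma> 1, \<sigma> 2, \<sigma> 2, \<sigma> 1, \<sigma>' 2, \<sigma>' 2, \<sigma>' 1, \<sigma>' 2, \<sigma>' 2, \<sigma> 1]"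
    by (rule eqv_via_free_reduce[OF squares_12_sym, of "[\<sigma>' 1, \<sigma>' 1, \<sigma>' 1]" "[\<sigma> 1, \<sigma>' 2, \<sigma>' 2, \<sigma>' 1, \<sigma>' 2, \<sigma>' 2, \<sigma> 1]"]) (simp_all)
  also have "eqv (Artin_rels 3) \<dots>
      []"
    by (rule eqv_via_free_reduce[OF squares_12_sym, of "[\<sigma>' 1, \<sigma>' 1]" "[\<sigma>' 2, \<sigma>' 2, \<sigma>' 1, \<sigma>' 2, \<sigma>' 2, \<sigma> 1]"]) (simp_all)
  finally show "eqv (Artin_rels 3) (word_map (case_prod pure_braid_word) (birman_relator 1 2 1 3)) []"
    unfolding w2 .
qed

lemma Artin_4_far_squares:
  "eqv (Artin_rels 4) ([\<sigma> 3, \<sigma> 3] @ [\<sigma> 1, \<sigma> 1]) ([\<sigma> 1, \<sigma> 1] @ [\<sigma> 3, \<sigma> 3])"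
  by (rule Artin_commute_lists) (auto simp: distant_def)

lemma Artin_4_conj_21: "eqv (Artin_rels 4) [\<sigma>' 1, \<sigma>' 2, \<sigma> 1, \<sigma> 1, \<sigma> 2, \<sigma> 1] [\<sigma> 2, \<sigma> 2]"
  using braid_conj_square[OF eqv.eqv_sym[OF Artin_braid_12[of 4]]] by simp

lemma birman_relator_Artin_disjoint:
  "eqv (Artin_rels 4) (word_map (case_prod pure_braid_word) (birman_relator 1 2 3 4)) []"
proof -
  have w3: "word_map (case_prod pure_braid_word) (birman_relator 1 2 3 4) = [\<sigma>' 1, \<sigma>' 1, \<sigma> 3, \<sigma> 3, \<sigma> 1, \<sigma> 1, \<sigma>' 3, \<sigma>' 3]"
    by (simp add: birman_relator_def pb_rhs_def pure_braid_word_def gen_def inv_word_def upt_rec)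
  have "eqv (Artin_rels 4) [\<sigma>' 1, \<sigma>' 1, \<sigma> 3, \<sigma> 3, \<sigma> 1, \<sigma> 1, \<sigma>' 3, \<sigma>' 3]
      []"
    by (rule eqv_via_free_reduce[OF Artin_4_far_squares, of "[\<sigma>' 1,\<sigma>' 1]" "[\<sigma>' 3,\<sigma>' 3]"]) (simp_all)
  then show ?thesis
    unfolding w3 .
qed

lemma birman_relator_Artin_nested:
  "eqv (Artin_rels 4) (word_map (case_prod pure_braid_word) (birman_relator 2 3 1 4)) []"
proof -
  have w4: "word_map (case_prod pure_braid_word) (birman_relator 2 3 1 4) = [\<sigma>' 2, \<sigma>' 2, \<sigma>' 1, \<sigma>' 2, \<sigma> 3, \<sigma> 3, \<sigma> 2, \<sigma> 1, \<sigma> 2, \<sigma> 2, \<sigma>' 1, \<sigma>' 2, \<sigma>' 3, \<sigma>' 3, \<sigma> 2, \<sigma> 1]"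
    by (simp add: birman_relator_def pb_rhs_def pure_braid_word_def gen_def inv_word_def upt_rec)
  have "eqv (Artin_rels 4) [\<sigma>' 2, \<sigma>' 2, \<sigma>' 1, \<sigma>' 2, \<sigma> 3, \<sigma> 3, \<sigma> 2, \<sigma> 1, \<sigma> 2, \<sigma> 2, \<sigma>' 1, \<sigma>' 2, \<sigma>' 3, \<sigma>' 3, \<sigma> 2, \<sigma> 1]
      [\<sigma>' 2, \<sigma>' 2, \<sigma>' 1, \<sigma>' 2, \<sigma> 3, \<sigma> 3, \<sigma> 1, \<sigma> 1, \<sigma>' 3, \<sigma>' 3, \<sigma> 2, \<sigma> 1]"
    by (rule eqv_via_free_reduce[OF eqv.eqv_sym[OF Artin_4_conj_21], of "[\<sigma>' 2, \<sigma>' 2, \<sigma>' 1, \<sigma>' 2, \<sigma> 3, \<sigma> 3, \<sigma> 2, \<sigma> 1]" "[\<sigma>' 1, \<sigma>' 2, \<sigma>' 3, \<sigma>' 3, \<sigma> 2, \<sigma> 1]"]) (simp_all)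
  also have "eqv (Artin_rels 4) \<dots>
      [\<sigma>' 2, \<sigma>' 2, \<sigma>' 1, \<sigma>' 2, \<sigma> 1, \<sigma> 1, \<sigma> 2, \<sigma> 1]"
    by (rule eqv_via_free_reduce[OF Artin_4_far_squares, of "[\<sigma>' 2, \<sigma>' 2, \<sigma>' 1, \<sigma>' 2]" "[\<sigma>' 3, \<sigma>' 3, \<sigma> 2, \<sigma> 1]"]) (simp_all)
  also have "eqv (Artin_rels 4) \<dots>
      []"
    by (rule eqv_via_free_reduce[OF Artin_4_conj_21, of "[\<sigma>' 2, \<sigma>' 2]" "[]"]) (simp_all)
  finally show ?thesis
    unfolding w4 .
qed

lemma birman_relator_Artin_crossing:
  "eqv (Artin_rels 4) (word_map (case_prod pure_braid_word) (birman_relator 1 3 2 4)) []"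
proof -
  have braid_23: "eqv (Artin_rels 4) [\<sigma> 2, \<sigma> 3, \<sigma> 2] [\<sigma> 3, \<sigma> 2, \<sigma> 3]"
    using Artin_braid[of 2 4] by (simp add: numeral_eq_Suc)
  note squares_23 = braid_squares_commute[OF braid_23, simplified]
  note conj_23 = braid_conj_square[OF braid_23, simplified]
  note conj_23_sym = eqv.eqv_sym[OF conj_23]
  note conj_23_inv = eqv_inv_word[OF conj_23]
  have far: "distant 4 1 3" "distant 4 3 1"
    by (auto simp: distant_def)
  have far_1_33: "eqv (Artin_rels 4) ([\<sigma> 1] @ [\<sigma> 3, \<sigma> 3]) ([\<sigma> 3, \<sigma> 3] @ [\<sigma> 1])"
    by (rule Artin_commute_lists) (use far in auto)
  have far_31: "eqv (Artin_rels 4) [\<sigma> 3, \<sigma> 1] [\<sigma> 1, \<sigma> 3]"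
    and far_1inv_3: "eqv (Artin_rels 4) [\<sigma>' 1, \<sigma> 3] [\<sigma> 3, \<sigma>' 1]"
    using Artin_far[OF far(2)] Artin_far[OF far(1)] by blast+
  have nested_sym: "eqv (Artin_rels 4) [\<sigma> 2, \<sigma> 2, \<sigma>' 1, \<sigma>' 2, \<sigma> 3, \<sigma> 3, \<sigma> 2, \<sigma> 1] [\<sigma>' 1, \<sigma>' 2, \<sigma> 3, \<sigma> 3, \<sigma> 2, \<sigma> 1, \<sigma> 2, \<sigma> 2]"
    using eqv_via_free_reduce[OF birman_relator_Artin_nested, of "[\<sigma> 2, \<sigma> 2]" "[\<sigma>' 1, \<sigma>' 2, \<sigma> 3, \<sigma> 3, \<sigma> 2, \<sigma> 1]"]
    by (simp add: birman_relator_def pb_rhs_def pure_braid_word_def gen_def inv_word_def upt_rec eqv.eqv_sym)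
  have "eqv (Artin_rels 4)
      [\<sigma>' 1, \<sigma> 2, \<sigma> 2, \<sigma> 1, \<sigma>' 1, \<sigma>' 2, \<sigma> 3, \<sigma> 3, \<sigma> 2, \<sigma> 1, \<sigma> 3, \<sigma> 3, \<sigma>' 1, \<sigma>' 2, \<sigma>' 3, \<sigma>' 3, \<sigma> 2, \<sigma> 1, \<sigma>' 3, \<sigma>' 3]
      [\<sigma>' 1, \<sigma> 2, \<sigma> 3, \<sigma> 3, \<sigma> 2, \<sigma> 3, \<sigma> 3, \<sigma>' 2, \<sigma>' 3, \<sigma>' 3, \<sigma> 2, \<sigma> 1, \<sigma>' 3, \<sigma>' 3]"
    by (rule eqv_via_free_reduce[OF far_1_33, of "[\<sigma>' 1, \<sigma> 2, \<sigma> 3, \<sigma> 3, \<sigma> 2]" "[\<sigma>' 1, \<sigma>' 2, \<sigma>' 3, \<sigma>' 3, \<sigma> 2, \<sigma> 1, \<sigma>' 3, \<sigma>' 3]"]) (simp_all)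
  also have "eqv (Artin_rels 4) \<dots>
      [\<sigma>' 1, \<sigma> 3, \<sigma> 3, \<sigma> 2, \<sigma> 2, \<sigma> 1, \<sigma>' 3, \<sigma>' 3]"
    by (rule eqv_via_free_reduce[OF squares_23, of "[\<sigma>' 1]" "[\<sigma>' 2, \<sigma>' 3, \<sigma>' 3, \<sigma> 2, \<sigma> 1, \<sigma>' 3, \<sigma>' 3]"]) (simp_all)
  also have "eqv (Artin_rels 4) \<dots>
      [\<sigma>' 1, \<sigma> 3, \<sigma>' 2, \<sigma> 3, \<sigma> 3, \<sigma> 2, \<sigma> 3, \<sigma> 1, \<sigma>' 3, \<sigma>' 3]"
    by (rule eqv_via_free_reduce[OF conj_23_sym, of "[\<sigma>' 1, \<sigma> 3, \<sigma> 3]" "[\<sigma> 1, \<sigma>' 3, \<sigma>' 3]"]) (simp_all)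
  also have "eqv (Artin_rels 4) \<dots>
      [\<sigma>' 1, \<sigma> 3, \<sigma>' 2, \<sigma> 3, \<sigma> 3, \<sigma> 2, \<sigma> 1, \<sigma>' 3]"
    by (rule eqv_via_free_reduce[OF far_31, of "[\<sigma>' 1, \<sigma> 3, \<sigma>' 2, \<sigma> 3, \<sigma> 3, \<sigma> 2]" "[\<sigma>' 3, \<sigma>' 3]"]) (simp_all)
  also have "eqv (Artin_rels 4) \<dots>
      [\<sigma> 3, \<sigma>' 1, \<sigma>' 2, \<sigma> 3, \<sigma> 3, \<sigma> 2, \<sigma> 1, \<sigma>' 3]"
    by (rule eqv_via_free_reduce[OF far_1inv_3, of "[]" "[\<sigma>' 2, \<sigma> 3, \<sigma> 3, \<sigma> 2, \<sigma> 1, \<sigma>' 3]"]) (simp_all)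
  finally have key: "eqv (Artin_rels 4) [\<sigma>' 1, \<sigma> 2, \<sigma> 2, \<sigma> 1, \<sigma>' 1, \<sigma>' 2, \<sigma> 3, \<sigma> 3, \<sigma> 2, \<sigma> 1, \<sigma> 3, \<sigma> 3, \<sigma>' 1, \<sigma>' 2, \<sigma>' 3, \<sigma>' 3, \<sigma> 2, \<sigma> 1, \<sigma>' 3, \<sigma>' 3] [\<sigma> 3, \<sigma>' 1, \<sigma>' 2, \<sigma> 3, \<sigma> 3, \<sigma> 2, \<sigma> 1, \<sigma>' 3]" .
  note key_inv = eqv_inv_word[OF key]
  have w5: "word_map (case_prod pure_braid_word) (birman_relator 1 3 2 4) = [\<sigma>' 1, \<sigma>' 2, \<sigma>' 2, \<sigma> 1, \<sigma>' 2, \<sigma> 3, \<sigma> 3, \<sigma> 2, \<sigma>' 1, \<sigma> 2, \<sigma> 2, \<sigma> 1, \<sigma>' 1, \<sigma>' 2, \<sigma> 3, \<sigma> 3, \<sigma> 2, \<sigma> 1, \<sigma> 3, \<sigma> 3, \<sigma>' 1, \<sigma>' 2, \<sigma>' 3, \<sigma>' 3, \<sigma> 2, \<sigma> 1, \<sigma>' 3, \<sigma>' 3, \<sigma>' 2, \<sigma>' 3, \<sigma>' 3, \<sigma> 2, \<sigma> 3, \<sigma> 3, \<sigma>' 1, \<sigma>' 2, \<sigma> 3, \<sigma> 3, \<sigma> 2, \<sigma> 1, \<sigma>' 3, \<sigma>' 3, \<sigma>' 1, \<sigma>' 2, \<sigma>' 3, \<sigma>' 3, \<sigma> 2, \<sigma>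 1]"
    by (simp add: birman_relator_def pb_rhs_def pure_braid_word_def gen_def inv_word_def upt_rec)
  have "eqv (Artin_rels 4) [\<sigma>' 1, \<sigma>' 2, \<sigma>' 2, \<sigma> 1, \<sigma>' 2, \<sigma> 3, \<sigma> 3, \<sigma> 2, \<sigma>' 1, \<sigma> 2, \<sigma> 2, \<sigma> 1, \<sigma>' 1, \<sigma>' 2, \<sigma> 3, \<sigma> 3, \<sigma> 2, \<sigma> 1, \<sigma> 3, \<sigma> 3, \<sigma>' 1, \<sigma>' 2, \<sigma>' 3, \<sigma>' 3, \<sigma> 2, \<sigma> 1, \<sigma>' 3, \<sigma>' 3, \<sigma>' 2, \<sigma>' 3, \<sigma>' 3, \<sigma> 2, \<sigma> 3, \<sigma> 3, \<sigma>' 1, \<sigma>' 2, \<sigma> 3, \<sigma> 3, \<sigma> 2, \<sigma> 1, \<sigma>' 3, \<sigma>' 3, \<sigma>' 1, \<sigma>' 2, \<sigma>' 3, \<sigma>' 3, \<sigma> 2, \<sigma> 1]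
      [\<sigma>' 1, \<sigma>' 2, \<sigma>' 2, \<sigma> 1, \<sigma>' 2, \<sigma> 3, \<sigma> 3, \<sigma> 2, \<sigma> 3, \<sigma>' 1, \<sigma>' 2, \<sigma> 3, \<sigma> 3, \<sigma> 2, \<sigma> 1, \<sigma>' 3, \<sigma>' 2, \<sigma>' 3, \<sigma>' 3, \<sigma> 2, \<sigma> 3, \<sigma> 3, \<sigma>' 1, \<sigma>' 2, \<sigma> 3, \<sigma> 3, \<sigma> 2, \<sigma> 1, \<sigma>' 3, \<sigma>' 3, \<sigma>' 1, \<sigma>' 2, \<sigma>' 3, \<sigma>' 3, \<sigma> 2, \<sigma> 1]"
    by (rule eqv_via_free_reduce[OF key, of "[\<sigma>' 1, \<sigma>' 2, \<sigma>' 2, \<sigma> 1, \<sigma>' 2, \<sigma> 3, \<sigma> 3, \<sigma> 2]" "[\<sigma>' 2, \<sigma>' 3, \<sigma>' 3, \<sigma> 2, \<sigma> 3, \<sigma> 3, \<sigma>' 1, \<sigma>' 2, \<sigma> 3, \<sigma> 3, \<sigma> 2, \<sigma> 1, \<sigma>' 3, \<sigma>' 3, \<sigma>' 1, \<sigma>' 2, \<sigma>' 3, \<sigma>' 3, \<sigma> 2, \<sigma> 1, \<sigma>' 1, \<sigma>' 2, \<sigma>' 2, \<sigma> 1, \<sigma>' 1, \<sigma> 2, \<sigma> 2, \<sigma> 1]"]) (simp_all)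
  also have "eqv (Artin_rels 4) \<dots>
      [\<sigma>' 1, \<sigma>' 2, \<sigma>' 2, \<sigma> 1, \<sigma>' 2, \<sigma> 3, \<sigma> 3, \<sigma> 2, \<sigma> 3, \<sigma>' 1, \<sigma>' 2, \<sigma> 3, \<sigma> 3, \<sigma> 2, \<sigma> 1, \<sigma>' 3, \<sigma>' 2, \<sigma>' 3, \<sigma>' 3, \<sigma> 2, \<sigma> 3, \<sigma>' 1, \<sigma>' 2, \<sigma>' 3, \<sigma>' 3, \<sigma> 2, \<sigma> 1, \<sigma>' 3, \<sigma>' 1, \<sigma> 2, \<sigma> 2, \<sigma> 1]"
    by (rule eqv_via_free_reduce[OF key_inv, of "[\<sigma>' 1, \<sigma>' 2, \<sigma>' 2, \<sigma> 1, \<sigma>' 2, \<sigma> 3, \<sigma> 3, \<sigma> 2, \<sigma> 3, \<sigma>' 1, \<sigma>' 2, \<sigma> 3, \<sigma> 3, \<sigma> 2, \<sigma> 1, \<sigma>' 3, \<sigma>' 2, \<sigma>' 3, \<sigma>' 3, \<sigma> 2]" "[\<sigma>' 1, \<sigma> 2, \<sigma> 2, \<sigma> 1]"]) (simp_all)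
  also have "eqv (Artin_rels 4) \<dots>
      [\<sigma>' 1, \<sigma>' 2, \<sigma>' 2, \<sigma> 1, \<sigma> 3, \<sigma> 2, \<sigma> 2, \<sigma>' 1, \<sigma>' 2, \<sigma> 3, \<sigma> 3, \<sigma> 2, \<sigma> 1, \<sigma>' 3, \<sigma>' 2, \<sigma>' 3, \<sigma>' 3, \<sigma> 2, \<sigma> 3, \<sigma>' 1, \<sigma>' 2, \<sigma>' 3, \<sigma>' 3, \<sigma> 2, \<sigma> 1, \<sigma>' 3, \<sigma>' 1, \<sigma> 2, \<sigma> 2, \<sigma> 1]"
    by (rule eqv_via_free_reduce[OF conj_23, of "[\<sigma>' 1, \<sigma>' 2, \<sigma>' 2, \<sigma> 1, \<sigma> 3]" "[\<sigma>' 1, \<sigma>' 2, \<sigma> 3, \<sigma> 3, \<sigma> 2, \<sigma> 1, \<sigma>' 3, \<sigma>' 2, \<sigma>' 3, \<sigma>' 3, \<sigma> 2, \<sigma> 3, \<sigma>' 1, \<sigma>' 2, \<sigma>' 3, \<sigma>' 3, \<sigma> 2, \<sigma> 1, \<sigma>' 3, \<sigma>' 1, \<sigma> 2, \<sigma> 2, \<sigma> 1]"]) (simp_all)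
  also have "eqv (Artin_rels 4) \<dots>
      [\<sigma>' 1, \<sigma>' 2, \<sigma>' 2, \<sigma> 1, \<sigma> 3, \<sigma> 2, \<sigma> 2, \<sigma>' 1, \<sigma>' 2, \<sigma> 3, \<sigma> 3, \<sigma> 2, \<sigma> 1, \<sigma>' 2, \<sigma>' 2, \<sigma>' 1, \<sigma>' 2, \<sigma>' 3, \<sigma>' 3, \<sigma> 2, \<sigma> 1, \<sigma>' 3, \<sigma>' 1, \<sigma> 2, \<sigma> 2, \<sigma> 1]"
    by (rule eqv_via_free_reduce[OF conj_23_inv, of "[\<sigma>' 1, \<sigma>' 2, \<sigma>' 2, \<sigma> 1, \<sigma> 3, \<sigma> 2, \<sigma> 2, \<sigma>' 1, \<sigma>' 2, \<sigma> 3, \<sigma> 3, \<sigma> 2, \<sigma> 1]" "[\<sigma>' 1, \<sigma>' 2, \<sigma>' 3, \<sigma>' 3, \<sigma> 2, \<sigma> 1, \<sigma>' 3, \<sigma>' 1, \<sigma> 2, \<sigma> 2, \<sigma> 1]"]) (simp_all)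
  also have "eqv (Artin_rels 4) \<dots>
      []"
    by (rule eqv_via_free_reduce[OF nested_sym, of "[\<sigma>' 1, \<sigma>' 2, \<sigma>' 2, \<sigma> 1, \<sigma> 3]" "[\<sigma>' 2, \<sigma>' 2, \<sigma>' 1, \<sigma>' 2, \<sigma>' 3, \<sigma>' 3, \<sigma> 2, \<sigma> 1, \<sigma>' 3, \<sigma>' 1, \<sigma> 2, \<sigma> 2, \<sigma> 1]"]) (simp_all)
  finally show ?thesis
    unfolding w5 .
qed

definition birman_indices :: "nat \<Rightarrow> nat \<Rightarrow> nat \<Rightarrow> nat \<Rightarrow> nat \<Rightarrow> bool" where
  "birman_indices N r s i j \<longleftrightarrow> 1 \<le> r \<and> r < s \<and> s \<le> N \<and> 1 \<le> i \<and> i < j \<and> j \<le> N \<and> pb_cond r s i j"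

lemma PB_rels_eq: "PB_rels N = {birman_relator r s i j | r s i j. birman_indices N r s i j}"
  by (auto simp: PB_rels_def birman_relator_def birman_indices_def)

lemma birman_indices_small:
  assumes v: "birman_indices N r s i j" and cover: "{1..N} \<subseteq> {r, s, i, j}"
  shows "(N = 3 \<and> (r, s, i, j) \<in> {(1, 2, 2, 3), (1, 2, 1, 3)}) \<or>
    (N = 4 \<and> (r, s, i, j) \<in> {(1, 2, 3, 4), (2, 3, 1, 4), (1, 3, 2, 4)})"
proof -
  have "card {1..N} \<le> card {r, s, i, j}"
    by (rule card_mono[OF _ cover]) simp
  moreover have "card {r, s, i, j} \<le> 4"
    using card_length[of "[r, s, i, j]"] by simp
  ultimately have "N \<le> 4"
    by simp
  moreover have b: "1 \<le> r" "r < s" "s \<le> N" "1 \<le> i" "i < j" "j \<le> N"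
    and pc: "s < i \<or> (i < r \<and> s < j) \<or> s = i \<or> (i = r \<and> s < j) \<or> (r < i \<and> i < s \<and> s < j)"
    using v by (auto simp: birman_indices_def pb_cond_def)
  ultimately consider "N = 2" | "N = 3" | "N = 4"
    by linarith
  then show ?thesis
  proof cases
    case 1
    then show ?thesis
      using b pc by linarith
  next
    case 2
    have covered: "2 \<in> {r, s, i, j}" "3 \<in> {r, s, i, j}"
      using subsetD[OF cover, of 2] subsetD[OF cover, of 3] 2 by simp_all
    have "(r, s) \<in> {(1, 2), (1, 3), (2, 3)}" "(i, j) \<in> {(1, 2), (1, 3), (2, 3)}"
      using b 2 by auto
    then show ?thesis
      by (simp only: insert_iff empty_iff prod.inject, elim disjE conjE) (use covered pc 2 in simp_all)
  next
    case 3
    have covered: "1 \<in> {r, s, i, j}" "2 \<in> {r, s, i, j}" "3 \<in> {r, s, i, j}" "4 \<in> {r, s, i, j}"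
      using subsetD[OF cover, of 1] subsetD[OF cover, of 2] subsetD[OF cover, of 3] subsetD[OF cover, of 4] 3
      by simp_all
    have "(r, s) \<in> {(1, 2), (1, 3), (1, 4), (2, 3), (2, 4), (3, 4)}"
      "(i, j) \<in> {(1, 2), (1, 3), (1, 4), (2, 3), (2, 4), (3, 4)}"
      using b 3 by auto
    then show ?thesis
      by (simp only: insert_iff empty_iff prod.inject, elim disjE conjE) (use covered pc 3 in simp_all)
  qed
qed

lemma birman_relator_letters:
  assumes "birman_indices N r s i j" "(x, b) \<in> set (birman_relator r s i j)"
  shows "1 \<le> fst x \<and> fst x < snd x \<and> snd x \<le> N"
proof -
  have v: "1 \<le> r" "r < s" "s \<le> N" "1 \<le> i" "i < j" "j \<le> N" "pb_cond r s i j"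
    using assms(1) by (auto simp: birman_indices_def)
  have "x \<in> {(r, s), (i, j)} \<union> fst ` set (pb_rhs r s i j)"
    using assms(2) by (force simp: birman_relator_def gen_def inv_word_def)
  moreover have "fst ` set (pb_rhs r s i j) \<subseteq> {(i, j)} \<or>
      (fst ` set (pb_rhs r s i j) \<subseteq> {(i, j), (r, j), (s, j)} \<and> r < j \<and> s < j)"
    using v unfolding pb_cond_def by (auto simp: pb_rhs_def Let_def gen_def inv_word_def)
  ultimately show ?thesis
    using v by auto
qed

definition relabel :: "nat \<Rightarrow> nat \<times> nat \<Rightarrow> (nat \<times> nat) word" where
  "relabel m = (\<lambda>(x, y). gen (index_insert m x, index_insert m y))"

lemma index_insert_less_iff: "index_insert m x < index_insert m y \<longleftrightarrow> x < y"
  by (auto simp: index_insert_def)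

lemma index_insert_eq_iff: "index_insert m x = index_insert m y \<longleftrightarrow> x = y"
  by (auto simp: index_insert_def)

lemma birman_relator_relabel:
  "birman_relator (index_insert m r) (index_insert m s) (index_insert m i) (index_insert m j) =
    word_map (relabel m) (birman_relator r s i j)"
proof -
  have "pb_rhs (index_insert m r) (index_insert m s) (index_insert m i) (index_insert m j) =
      word_map (relabel m) (pb_rhs r s i j)"
    by (simp add: pb_rhs_def Let_def relabel_def index_insert_less_iff index_insert_eq_iff)
  then show ?thesis
    by (simp add: birman_relator_def relabel_def)
qed

lemma birman_relator_Artin_index_insert:
  assumes "birman_indices N r s i j" "1 \<le> m" "m \<le> Suc N"
    and "eqv (Artin_rels N) (word_map (case_prod pure_braid_word) (birman_relator r s i j)) []"
  shows "eqv (Artin_rels (Suc N)) (word_map (case_prod pure_braid_word)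
    (birman_relator (index_insert m r) (index_insert m s) (index_insert m i) (index_insert m j))) []"
proof -
  let ?w = "birman_relator r s i j"
  have "word_map (case_prod pure_braid_word) (word_map (relabel m) ?w) =
      word_map (\<lambda>x. pure_braid_word (index_insert m (fst x)) (index_insert m (snd x))) ?w"
    by (simp add: word_map_word_map relabel_def case_prod_beta)
  also have "eqv (Artin_rels (Suc N)) \<dots> (word_map (\<lambda>x. word_map (strand_insert m) (pure_braid_word (fst x) (snd x))) ?w)"
  proof (rule eqv_word_map_cong)
    fix x b
    assume "(x, b) \<in> set ?w"
    then have "1 \<le> fst x \<and> fst x < snd x \<and> snd x \<le> N"
      by (rule birman_relator_letters[OF assms(1)])
    then show "eqv (Artin_rels (Suc N)) (pure_braid_word (index_insert m (fst x)) (index_insert m (snd x)))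
        (word_map (strand_insert m) (pure_braid_word (fst x) (snd x)))"
      using strand_insert_pure_braid_word[of "fst x" "snd x" "Suc N" m] assms(2,3) by (auto intro: eqv.eqv_sym)
  qed
  also have "\<dots> = word_map (strand_insert m) (word_map (case_prod pure_braid_word) ?w)"
    by (simp add: word_map_word_map case_prod_beta)
  also have "eqv (Artin_rels (Suc N)) \<dots> (word_map (strand_insert m) [])"
    by (rule eqv_word_map[OF _ assms(4)]) (use strand_insert_Artin_relator assms(2,3) in auto)
  finally show ?thesis
    by (simp add: birman_relator_relabel)
qed

lemma sh_less_iff: "x \<noteq> m \<Longrightarrow> y \<noteq> m \<Longrightarrow> sh m x < sh m y \<longleftrightarrow> x < y"
  by (auto simp: sh_def)

lemma sh_eq_iff: "x \<noteq> m \<Longrightarrow> y \<noteq> m \<Longrightarrow> sh m x = sh m y \<longleftrightarrow> x = y"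
  by (auto simp: sh_def)

lemma birman_indices_sh:
  assumes v: "birman_indices (Suc N) r s i j" and m: "m \<in> {1..Suc N}" "m \<notin> {r, s, i, j}"
  shows "birman_indices N (sh m r) (sh m s) (sh m i) (sh m j)"
proof -
  have range: "1 \<le> t" "t \<le> Suc N" if "t \<in> {r, s, i, j}" for t
    using v that by (auto simp: birman_indices_def)
  have sh: "1 \<le> sh m t \<and> sh m t \<le> N" if "t \<in> {r, s, i, j}" for t
    using range[OF that] m that by (auto simp: sh_def)
  have "r \<noteq> m" "s \<noteq> m" "i \<noteq> m" "j \<noteq> m"
    using m(2) by auto
  note iso = sh_less_iff[OF this(1,2)] sh_less_iff[OF this(3,4)] sh_less_iff[OF this(2,3)]
    sh_less_iff[OF this(3,1)] sh_less_iff[OF this(1,3)] sh_less_iff[OF this(3,2)] sh_less_iff[OF this(2,4)]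
    sh_eq_iff[OF this(2,3)] sh_eq_iff[OF this(3,1)]
  have "pb_cond (sh m r) (sh m s) (sh m i) (sh m j) \<longleftrightarrow> pb_cond r s i j"
    unfolding pb_cond_def iso ..
  with v sh[of r] sh[of s] sh[of i] sh[of j] iso show ?thesis
    by (simp add: birman_indices_def)
qed

text \<open>A Birman relation involves at most four strands. If it misses a strand, it is the image of a
  Birman relation of \<open>PB\<^sub>N\<^sub>-\<^sub>1\<close> under strand insertion; otherwise it is one of the five
  relations for \<open>N \<le> 4\<close> checked above.\<close>

theorem birman_relator_Artin:
  "birman_indices N r s i j \<Longrightarrow> eqv (Artin_rels N) (word_map (case_prod pure_braid_word) (birman_relator r s i j)) []"
proof (induction N arbitrary: r s i j)
  case 0
  then show ?case
    by (auto simp: birman_indices_def)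
next
  case (Suc N)
  show ?case
  proof (cases "{1..Suc N} \<subseteq> {r, s, i, j}")
    case True
    then show ?thesis
      using birman_indices_small[OF Suc.prems] birman_relators_3 birman_relator_Artin_disjoint birman_relator_Artin_nested birman_relator_Artin_crossing
      by (auto simp: numeral_eq_Suc)
  next
    case False
    then obtain m where m: "m \<in> {1..Suc N}" "m \<notin> {r, s, i, j}"
      by blast
    then have "index_insert m (sh m t) = t" if "t \<in> {r, s, i, j}" for t
      using that by (auto simp: index_insert_def sh_def)
    then have "birman_relator r s i j =
        birman_relator (index_insert m (sh m r)) (index_insert m (sh m s)) (index_insert m (sh m i)) (index_insert m (sh m j))"
      by simp
    then show ?thesis
      using birman_relator_Artin_index_insert[OF birman_indices_sh[OF Suc.prems m] _ _
          Suc.IH[OF birman_indices_sh[OF Suc.prems m]]] m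
      by simp
  qed
qed

section \<open>\<open>\<phi>\<^sub>N\<close> is a homomorphism\<close>

lemma braid_G_word_map:
  "(\<And>x b. (x, b) \<in> set w \<Longrightarrow> braid_perm N \<pi> (g x) = \<pi>) \<Longrightarrow>
    braid_G N \<pi> (word_map g w) = word_map (\<lambda>x. braid_G N \<pi> (g x)) w \<and> braid_perm N \<pi> (word_map g w) = \<pi>"
proof (induction w)
  case (Cons e w)
  obtain x b where e: "e = (x, b)"
    by fastforce
  have x: "braid_perm N \<pi> (g x) = \<pi>"
    by (rule Cons.prems[of x b]) (simp add: e)
  have IH: "braid_G N \<pi> (word_map g w) = word_map (\<lambda>x. braid_G N \<pi> (g x)) w"
    "braid_perm N \<pi> (word_map g w) = \<pi>"
    using Cons.IH Cons.prems by auto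
  have "braid_G N \<pi> (inv_word (g x)) = inv_word (braid_G N \<pi> (g x))"
    "braid_perm N \<pi> (inv_word (g x)) = \<pi>"
    using braid_G_inv_word[of N \<pi> "g x"] x by simp_all
  with IH e x show ?case
    by (cases b) (simp_all add: braid_G_append braid_perm_append)
qed simp

lemma phi_birman_relator:
  assumes "r \<in> PB_rels N"
  shows "eqv (G_rels N) (word_map (phi N) r) []"
proof -
  obtain r' s' i' j' where r: "r = birman_relator r' s' i' j'" and v: "birman_indices N r' s' i' j'"
    using assms by (auto simp: PB_rels_eq)
  have gens: "phi N x = braid_G N id (case_prod pure_braid_word x)"
    "braid_perm N id (case_prod pure_braid_word x) = id" if "(x, b) \<in> set r" for x b
    using phi_eq_braid_G birman_relator_letters[OF v] that r by (auto simp: case_prod_beta)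
  have "word_map (phi N) r = word_map (\<lambda>x. braid_G N id (case_prod pure_braid_word x)) r"
    by (rule word_map_cong[OF gens(1)])
  also have "\<dots> = braid_G N id (word_map (case_prod pure_braid_word) r)"
  proof -
    have "braid_G N id (word_map (case_prod pure_braid_word) r) =
        word_map (\<lambda>x. braid_G N id (case_prod pure_braid_word x)) r \<and>
      braid_perm N id (word_map (case_prod pure_braid_word) r) = id"
      by (rule braid_G_word_map) (fact gens(2))
    then show ?thesis
      by simp
  qed
  also have "eqv (G_rels N) \<dots> (braid_G N id [])"
    using braid_G_eqv[OF _ is_perm_id] birman_relator_Artin[OF v] unfolding r by blast
  finally show ?thesis
    by simp
qed

lemma eqv_word_map_phi: "eqv (PB_rels N) u v \<Longrightarrow> eqv (G_rels N) (word_map (phi N) u) (word_map (phi N) v)"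
  by (rule eqv_word_map[OF phi_birman_relator])

section \<open>Deleting a strand\<close>

lemma map_sh_filter_upt: "map (sh m) (filter (\<lambda>l. l \<noteq> m) [x..<y]) = [(if x \<le> m then x else x - 1)..<(if y \<le> m then y else y - 1)]"
proof (induction y)
  case 0 then show ?case by simp
next
  case (Suc y)
  show ?case
  proof (cases "x \<le> y")
    case False
    then have L: "[x..<Suc y] = []" by simp
    have R: "[(if x \<le> m then x else x - 1)..<(if Suc y \<le> m then Suc y else Suc y - 1)] = []"
      using False by auto
    show ?thesis unfolding L R by simp
  next
    case True
    have e: "[x..<Suc y] = [x..<y] @ [y]" using True by simp
    consider (a) "y < m" | (b) "y = m" | (c) "m < y" by linarith
    then show ?thesis
    proof cases
      case a
      have "sh m y = y" using a by (simp add: sh_def)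
      then show ?thesis using Suc a True by (simp add: e)
    next
      case b
      then show ?thesis using Suc True by (simp add: e)
    next
      case c
      have s: "sh m y = y - 1" using c by (simp add: sh_def)
      have x': "(if x \<le> m then x else x - 1) \<le> y - 1" using True c by auto
      have "[(if x \<le> m then x else x - 1)..<y - 1] @ [y - 1] = [(if x \<le> m then x else x - 1)..<y]"
        using x' c by (metis Suc_diff_1 le_less_trans not_less_zero upt_Suc_append gr0I)
      then show ?thesis using Suc c True s by (simp add: e)
    qed
  qed
qed

lemma map_sh_filter_commute:
  "i \<noteq> m \<Longrightarrow> map (sh m) (filter (\<lambda>l. l \<noteq> m) (filter (\<lambda>l. l \<noteq> i) L)) =
    filter (\<lambda>l. l \<noteq> sh m i) (map (sh m) (filter (\<lambda>l. l \<noteq> m) L))"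
  by (induction L) (auto simp: sh_eq_iff)

lemma qdel_edge_letters:
  "word_map (qdel m) (edge_letters i k L) =
    (if m = i \<or> m = k then [] else edge_letters (sh m i) (sh m k) (map (sh m) (filter (\<lambda>l. l \<noteq> m) L)))"
  by (induction L) (auto simp: qdel_def gen_def)

lemma qdel_c_deleted: "m = i \<or> m = k \<Longrightarrow> word_map (qdel m) (c n i k) = []"
  unfolding c_eq_edge_letters qdel_edge_letters by simp

lemma qdel_c:
  assumes "1 \<le> i" "1 \<le> k" "i \<noteq> k" "k \<le> n" "1 \<le> m" "m \<le> n" "m \<noteq> i" "m \<noteq> k"
  shows "word_map (qdel m) (c n i k) = c (n - 1) (sh m i) (sh m k)"
proof -
  define L where "L = [k + 1..<n + 1] @ [1..<k]"
  have "map (sh m) (filter (\<lambda>l. l \<noteq> m) [k + 1..<n + 1]) = [sh m k + 1..<(n - 1) + 1]"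
    "map (sh m) (filter (\<lambda>l. l \<noteq> m) [1..<k]) = [1..<sh m k]"
    using map_sh_filter_upt[of m "k + 1" "n + 1"] map_sh_filter_upt[of m 1 k] assms by (auto simp: sh_def)
  then have L: "map (sh m) (filter (\<lambda>l. l \<noteq> m) (filter (\<lambda>l. l \<noteq> i) L)) =
      filter (\<lambda>l. l \<noteq> sh m i) ([sh m k + 1..<(n - 1) + 1] @ [1..<sh m k])"
    unfolding map_sh_filter_commute[OF assms(7)[symmetric]] L_def filter_append map_append by simp
  have "word_map (qdel m) (c n i k) =
      edge_letters (sh m i) (sh m k) (map (sh m) (filter (\<lambda>l. l \<noteq> m) (filter (\<lambda>l. l \<noteq> i) L)))"
    unfolding c_eq_edge_letters qdel_edge_letters L_def using assms(7,8) by simp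
  also have "\<dots> = c (n - 1) (sh m i) (sh m k)"
    unfolding L c_eq_edge_letters ..
  finally show ?thesis .
qed

lemma concat_map_if_sh:
  "concat (map (\<lambda>l. if l = m then [] else F (sh m l)) L) = concat (map F (map (sh m) (filter (\<lambda>l. l \<noteq> m) L)))"
  by (induction L) auto

lemma qdel_concat_c:
  assumes "1 \<le> i" "i < j" "j \<le> n" "1 \<le> m" "m \<le> n" "m \<noteq> i" "m \<noteq> j"
  shows "word_map (qdel m) (concat (map (c n i) (rev [i + 1..<j]))) =
    concat (map (c (n - 1) (sh m i)) (rev [sh m i + 1..<sh m j]))"
proof -
  have "word_map (qdel m) (concat (map (c n i) (rev [i + 1..<j]))) =
      concat (map (\<lambda>k. if k = m then [] else c (n - 1) (sh m i) (sh m k)) (rev [i + 1..<j]))"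
    unfolding word_map_concat map_map comp_def
  proof (rule arg_cong[where f = concat], rule map_cong[OF refl])
    fix k
    assume "k \<in> set (rev [i + 1..<j])"
    then show "word_map (qdel m) (c n i k) = (if k = m then [] else c (n - 1) (sh m i) (sh m k))"
      using qdel_c[of i k n m] qdel_c_deleted[of m i k n] assms by auto
  qed
  also have "\<dots> = concat (map (c (n - 1) (sh m i)) (map (sh m) (filter (\<lambda>k. k \<noteq> m) (rev [i + 1..<j]))))"
    by (rule concat_map_if_sh)
  also have "map (sh m) (filter (\<lambda>k. k \<noteq> m) (rev [i + 1..<j])) = rev [sh m i + 1..<sh m j]"
  proof -
    have "map (sh m) (filter (\<lambda>k. k \<noteq> m) [i + 1..<j]) = [sh m i + 1..<sh m j]"
      using map_sh_filter_upt[of m "i + 1" j] assms by (auto simp: sh_def)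
    then show ?thesis
      by (simp only: rev_filter[symmetric] rev_map[symmetric])
  qed
  finally show ?thesis .
qed

lemma qdel_phi:
  assumes ij: "1 \<le> i" "i < j" "j \<le> n" and m: "1 \<le> m" "m \<le> n"
  shows "eqv (G_rels (n - 1)) (word_map (qdel m) (phi n (i, j))) (word_map (phi (n - 1)) (pdel m (i, j)))"
proof -
  define M where "M = concat (map (c n i) (rev [i + 1..<j]))"
  have phi: "phi n (i, j) = inv_word M @ c n i j @ c n i j @ M"
    by (simp add: phi_def M_def Let_def)
  consider "m = i" | "m = j" | "m \<noteq> i" "m \<noteq> j"
    by blast
  then show ?thesis
  proof cases
    case 1
    then have "word_map (qdel m) M = []" "word_map (qdel m) (c n i j) = []"
      by (simp_all add: M_def word_map_concat qdel_c_deleted)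
    then show ?thesis
      using 1 by (simp add: phi pdel_def eqv.eqv_refl)
  next
    case 2
    then have "word_map (qdel m) (c n i j) = []"
      by (simp add: qdel_c_deleted)
    then show ?thesis
      using 2 eqv_inv_word_append[of "G_rels (n - 1)" "word_map (qdel m) M"] by (simp add: phi pdel_def)
  next
    case 3
    then have "word_map (qdel m) (phi n (i, j)) = word_map (phi (n - 1)) (pdel m (i, j))"
      using ij m qdel_concat_c[OF ij m 3] qdel_c[of i j n m]
      by (simp add: phi M_def phi_def Let_def pdel_def)
    then show ?thesis
      by (simp add: eqv.eqv_refl)
  qed
qed

lemma qdel_phi_word:
  assumes "is_PB_word n \<beta>" "m \<in> {1..n}"
  shows "eqv (G_rels (n - 1)) (word_map (qdel m) (word_map (phi n) \<beta>)) (word_map (phi (n - 1)) (word_map (pdel m) \<beta>))"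
proof -
  have "eqv (G_rels (n - 1)) (word_map (\<lambda>x. word_map (qdel m) (phi n x)) \<beta>)
      (word_map (\<lambda>x. word_map (phi (n - 1)) (pdel m x)) \<beta>)"
  proof (rule eqv_word_map_cong)
    fix x b
    assume "(x, b) \<in> set \<beta>"
    then have "1 \<le> fst x" "fst x < snd x" "snd x \<le> n"
      using assms(1) unfolding is_PB_word_def by auto
    then show "eqv (G_rels (n - 1)) (word_map (qdel m) (phi n x)) (word_map (phi (n - 1)) (pdel m x))"
      using qdel_phi[of "fst x" "snd x" n m] assms(2) by simp
  qed
  then show ?thesis
    by (simp add: word_map_word_map)
qed

theorem mainTheorem1:
  fixes n :: nat and \<beta> :: "(nat \<times> nat) word"
  assumes "n \<ge> 3"
    and "is_PB_word n \<beta>"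
    and "Brunnian_braid n \<beta>"
  shows "Brunnian_G n (word_map (phi n) \<beta>)"
  unfolding Brunnian_G_def
proof
  fix m
  assume m: "m \<in> {1..n}"
  have "eqv (G_rels (n - 1)) (word_map (qdel m) (word_map (phi n) \<beta>)) (word_map (phi (n - 1)) (word_map (pdel m) \<beta>))"
    by (rule qdel_phi_word[OF assms(2) m])
  also have "eqv (G_rels (n - 1)) \<dots> (word_map (phi (n - 1)) [])"
    using assms(3) m by (intro eqv_word_map_phi) (simp add: Brunnian_braid_def)
  finally show "eqv (G_rels (n - 1)) (word_map (qdel m) (word_map (phi n) \<beta>)) []"
    by simp
qed

end
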